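(* Consider the following chemical reaction network (the ERK cascade without feedback in which MEK and ERK share the same phosphatase PH) with 21 species RAF, pRAF, MEK, pMEK, ppMEK, ERK, pERK, ppERK, RAS, RAFPH, PH, RAS-RAF, MEK-pRAF, pMEK-pRAF, ERK-ppMEK, pERK-ppMEK, RAF-RAFPH, ppMEK-PH, pMEK-PH, ppERK-PH, pERK-PH and 30 reactions with rate constants $k_1,\dots,k_{30}$: RAF + RAS $\underset{k_2}{\overset{k_1}{\rightleftarrows}}$ RAS-RAF $\overset{k_3}{\to}$ pRAF + RAS; pRAF + RAFPH $\underset{k_5}{\overset{k_4}{\rightleftarrows}}$ RAF-RAFPH $\overset{k_6}{\to}$ RAF + RAFPH; MEK + pRAF $\underset{k_8}{\overset{k_7}{\rightleftarrows}}$ MEK-pRAF $\overset{k_9}{\to}$ pMEK + pRAF $\underset{k_{11}}{\overset{k_{10}}{\rightleftarrows}}$ pMEK-pRAF $\overset{k_{12}}{\to}$ ppMEK + pRAF; ppMEK + PH $\underset{k_{14}}{\overset{k_{13}}{\rightleftarrows}}$ ppMEK-PH $\overset{k_{15}}{\to}$ pMEK + PH $\underset{k_{17}}{\overset{k_{16}}{\rightleftarrows}}$ pMEK-PH $\overset{k_{18}}{\to}$ MEK + PH; ERK + ppMEK $\underset{k_{20}}{\overset{k_{19}}{\rightleftarrows}}$ ERK-ppMEK $\overset{k_{21}}{\to}$ pERK + ppMEK $\underset{k_{23}}{\overset{k_{22}}{\rightleftarrows}}$ pERK-ppMEK $\overset{k_{24}}{\to}$ ppERK + ppMEK; ppERK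 + PH $\underset{k_{26}}{\overset{k_{25}}{\rightleftarrows}}$ ppERK-PH $\overset{k_{27}}{\to}$ pERK + PH $\underset{k_{29}}{\overset{k_{28}}{\rightleftarrows}}$ pERK-PH $\overset{k_{30}}{\to}$ ERK + PH. Then the associated mass-action system has the capacity for multistationarity: there exist positive rate constants $k\in\mathbb{R}^{30}_{>0}$ and a stoichiometric compatibility class containing two distinct positive steady states, and these can be chosen so that both steady states are stable.
   Context: For a reaction network with species concentrations $x\in\mathbb{R}^s$ and reactions $y\to y'$ (complexes $y,y'\in\mathbb{Z}_{\ge0}^s$) with positive rate constants, the mass-action system is $\dot x=\sum_{y\to y'}k_{y\to y'}x^{y}(y'-y)$. The stoichiometric subspace $\mathcal{S}$ is the span of all reaction vectors $y'-y$; the stoichiometric compatibility class of $x^0\in\mathbb{R}^s_{>0}$ is $(x^0+\mathcal{S})\cap\mathbb{R}^s_{\ge0}$, which is forward invariant. A positive steady state is $x\in\mathbb{R}^s_{>0}$ with $\dot x=0$. The system exhibits multistationarity if some stoichiometric compatibility class contains two or more steady states in its relative interior; a network has the capacity for multistationarity if this happens for some choice of positive rate constants. Stability of a steady state is understood for the dynamics restricted to its stoichiometric compatibility class. *)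

theory Defs
  imports "HOL-Analysis.Analysis"
begin

datatype species =
    RAF | pRAF | MEK | pMEK | ppMEK | ERK | pERK | ppERK | RAS | RAFPH | PH
  | RAS_RAF | MEK_pRAF | pMEK_pRAF | ERK_ppMEK | pERK_ppMEK | RAF_RAFPH
  | ppMEK_PH | pMEK_PH | ppERK_PH | pERK_PH

lemma UNIV_species:
  "(UNIV :: species set) = {RAF, pRAF, MEK, pMEK, ppMEK, ERK, pERK, ppERK, RAS, RAFPH, PH,
     RAS_RAF, MEK_pRAF, pMEK_pRAF, ERK_ppMEK, pERK_ppMEK, RAF_RAFPH,
     ppMEK_PH, pMEK_PH, ppERK_PH, pERK_PH}"
  by (auto intro: species.exhaust)

instance species :: finite
  by standard (simp add: UNIV_species)

definition cplx :: "species list \<Rightarrow> species \<Rightarrow> nat" where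
  "cplx xs s = count_list xs s"

text \<open>The 30 reactions, listed in the order of the rate constants k1..k30
  (index i in 0..29 corresponds to rate constant k_(i+1)).\<close>

definition erk_reactions :: "(species list \<times> species list) list" where
  "erk_reactions = [
    ([RAF, RAS], [RAS_RAF]),            \<comment> \<open>k1\<close>
    ([RAS_RAF], [RAF, RAS]),            \<comment> \<open>k2\<close>
    ([RAS_RAF], [pRAF, RAS]),           \<comment> \<open>k3\<close>
    ([pRAF, RAFPH], [RAF_RAFPH]),       \<comment> \<open>k4\<close>
    ([RAF_RAFPH], [pRAF, RAFPH]),       \<comment> \<open>k5\<close>
    ([RAF_RAFPH], [RAF, RAFPH]),        \<comment> \<open>k6\<close>
    ([MEK, pRAF], [MEK_pRAF]),          \<comment> \<open>k7\<close>
    ([MEK_pRAF], [MEK, pRAF]),          \<comment> \<open>k8\<close>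
    ([MEK_pRAF], [pMEK, pRAF]),         \<comment> \<open>k9\<close>
    ([pMEK, pRAF], [pMEK_pRAF]),        \<comment> \<open>k10\<close>
    ([pMEK_pRAF], [pMEK, pRAF]),        \<comment> \<open>k11\<close>
    ([pMEK_pRAF], [ppMEK, pRAF]),       \<comment> \<open>k12\<close>
    ([ppMEK, PH], [ppMEK_PH]),          \<comment> \<open>k13\<close>
    ([ppMEK_PH], [ppMEK, PH]),          \<comment> \<open>k14\<close>
    ([ppMEK_PH], [pMEK, PH]),           \<comment> \<open>k15\<close>
    ([pMEK, PH], [pMEK_PH]),            \<comment> \<open>k16\<close>
    ([pMEK_PH], [pMEK, PH]),            \<comment> \<open>k17\<close>
    ([pMEK_PH], [MEK, PH]),             \<comment> \<open>k18\<close>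
    ([ERK, ppMEK], [ERK_ppMEK]),        \<comment> \<open>k19\<close>
    ([ERK_ppMEK], [ERK, ppMEK]),        \<comment> \<open>k20\<close>
    ([ERK_ppMEK], [pERK, ppMEK]),       \<comment> \<open>k21\<close>
    ([pERK, ppMEK], [pERK_ppMEK]),      \<comment> \<open>k22\<close>
    ([pERK_ppMEK], [pERK, ppMEK]),      \<comment> \<open>k23\<close>
    ([pERK_ppMEK], [ppERK, ppMEK]),     \<comment> \<open>k24\<close>
    ([ppERK, PH], [ppERK_PH]),          \<comment> \<open>k25\<close>
    ([ppERK_PH], [ppERK, PH]),          \<comment> \<open>k26\<close>
    ([ppERK_PH], [pERK, PH]),           \<comment> \<open>k27\<close>
    ([pERK, PH], [pERK_PH]),            \<comment> \<open>k28\<close>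
    ([pERK_PH], [pERK, PH]),            \<comment> \<open>k29\<close>
    ([pERK_PH], [ERK, PH])              \<comment> \<open>k30\<close>
  ]"

definition rvec :: "nat \<Rightarrow> real ^ species" where
  "rvec i = (\<chi> s. real (cplx (snd (erk_reactions ! i)) s) - real (cplx (fst (erk_reactions ! i)) s))"

definition rmono :: "nat \<Rightarrow> real ^ species \<Rightarrow> real" where
  "rmono i x = (\<Prod>s\<in>UNIV. (x $ s) ^ cplx (fst (erk_reactions ! i)) s)"

definition fld :: "(nat \<Rightarrow> real) \<Rightarrow> real ^ species \<Rightarrow> real ^ species" where
  "fld k x = (\<Sum>i<length erk_reactions. (k i * rmono i x) *\<^sub>R rvec i)"

definition stoich :: "(real ^ species) set" where
  "stoich = span (rvec ` {..<length erk_reactions})"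

definition compat_class :: "real ^ species \<Rightarrow> (real ^ species) set" where
  "compat_class x0 = {z. z - x0 \<in> stoich \<and> (\<forall>s. 0 \<le> z $ s)}"

definition positive_steady_state :: "(nat \<Rightarrow> real) \<Rightarrow> real ^ species \<Rightarrow> bool" where
  "positive_steady_state k x \<longleftrightarrow> (\<forall>s. 0 < x $ s) \<and> fld k x = 0"

definition is_solution :: "(nat \<Rightarrow> real) \<Rightarrow> (real \<Rightarrow> real ^ species) \<Rightarrow> real ^ species \<Rightarrow> bool" where
  "is_solution k phi z \<longleftrightarrow> phi 0 = z \<and>
     (\<forall>t\<ge>0. (phi has_vector_derivative fld k (phi t)) (at t within {0..}))"

definition asympt_stable :: "(nat \<Rightarrow> real) \<Rightarrow> real ^ species \<Rightarrow> bool" where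
  "asympt_stable k xs \<longleftrightarrow>
     (\<forall>\<epsilon>>0. \<exists>\<delta>>0. \<forall>z phi. z \<in> compat_class xs \<and> dist z xs < \<delta> \<and> is_solution k phi z
        \<longrightarrow> (\<forall>t\<ge>0. dist (phi t) xs < \<epsilon>)) \<and>
     (\<exists>\<delta>>0. \<forall>z phi. z \<in> compat_class xs \<and> dist z xs < \<delta> \<and> is_solution k phi z
        \<longrightarrow> (phi \<longlongrightarrow> xs) at_top)"

end

theory Submission
  imports Defs
begin

text \<open>The rate constants and both steady states are explicit rationals; that they are
  steady states, and that their difference lies in the span of the reaction vectors, is a
  computation. Stability is shown with a quadratic Lyapunov function \<open>V v = v\<^sup>T Q v\<close> on the
  stoichiometric subspace, which the six conservation laws parametrize by 15 free species.
  The certificate \<open>Q = R\<^sup>T R + \<mu> \<cdot> 1\<close> (on the free species) is positive definite by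
  construction, and if \<open>A\<close> is the scaled linearization at the steady state, the symmetric
  part of \<open>2 Q A\<close> is negative definite because it is strictly diagonally dominant. The
  mass-action field is quadratic, so the remainder in \<open>dV/dt\<close> is cubic and is dominated near
  the steady state; hence \<open>V\<close> decays exponentially along nearby solutions.\<close>

section \<open>Solutions and conservation laws\<close>

lemma has_real_derivative_compose_vector_derivative:
  assumes "(phi has_vector_derivative p) (at t within S)" and "(G has_derivative G') (at (phi t))"
  shows "((\<lambda>t. G (phi t)) has_real_derivative G' p) (at t within S)"
proof -
  have "linear G'"
    using assms(2) has_derivative_bounded_linear bounded_linear.linear by blast
  then have "G' \<circ> (\<lambda>x. x *\<^sub>R p) = (\<lambda>x. G' p * x)"
    by (auto simp: linear_scale mult.commute)
  moreover have "((G \<circ> phi) has_derivative (G' \<circ> (\<lambda>x. x *\<^sub>R p))) (at t within S)"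
    using diff_chain_within[OF assms(1)[unfolded has_vector_derivative_def]
        has_derivative_at_withinI[OF assms(2)]] .
  ultimately show ?thesis
    by (simp add: has_field_derivative_def o_def)
qed

lemma is_solution_has_vector_derivative_at:
  assumes "is_solution k phi z" and "0 < t"
  shows "(phi has_vector_derivative fld k (phi t)) (at t)"
proof -
  have "at t within {0..} = at t"
    using assms(2) by (intro at_within_interior) simp
  then show ?thesis
    using assms by (metis is_solution_def less_imp_le)
qed

lemma is_solution_continuous_on:
  assumes "is_solution k phi z"
  shows "continuous_on {0..} phi"
  using assms has_vector_derivative_continuous
  by (force simp: is_solution_def continuous_on_eq_continuous_within)

lemma is_solution_compose_has_real_derivative:
  assumes "is_solution k phi z" and "0 < t" and "\<And>v. (G has_derivative G' v) (at v)"
  shows "((\<lambda>t. G (phi t)) has_real_derivative G' (phi t) (fld k (phi t))) (at t)"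
  using has_real_derivative_compose_vector_derivative
    [OF is_solution_has_vector_derivative_at[OF assms(1,2)] assms(3)] .

lemma is_solution_compose_continuous_on:
  assumes "is_solution k phi z" and "\<And>v. (G has_derivative G' v) (at v)"
  shows "continuous_on {0..} (\<lambda>t. G (phi t))"
proof -
  have "continuous_on UNIV G"
    using assms(2) has_derivative_continuous by (metis continuous_at_imp_continuous_on)
  then show ?thesis
    using is_solution_continuous_on[OF assms(1)] by (metis continuous_on_compose2 subset_UNIV)
qed

lemma inner_fld_eq_0:
  assumes "\<And>i. i < length erk_reactions \<Longrightarrow> w \<bullet> rvec i = 0"
  shows "w \<bullet> fld k x = 0"
  using assms by (simp add: fld_def inner_sum_right)

lemma inner_stoich_eq_0:
  assumes "\<And>i. i < length erk_reactions \<Longrightarrow> w \<bullet> rvec i = 0" and "v \<in> stoich"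
  shows "w \<bullet> v = 0"
proof -
  have "span (rvec ` {..<length erk_reactions}) \<subseteq> {v. w \<bullet> v = 0}"
    using assms(1) by (intro span_minimal) (auto simp: subspace_def inner_add_right)
  then show ?thesis
    using assms(2) by (auto simp: stoich_def)
qed

lemma inner_solution_const:
  assumes "\<And>i. i < length erk_reactions \<Longrightarrow> w \<bullet> rvec i = 0"
    and "is_solution k phi z" and "0 \<le> t"
  shows "w \<bullet> phi t = w \<bullet> z"
proof (cases "t = 0")
  case True
  then show ?thesis using assms(2) by (simp add: is_solution_def)
next
  case False
  have inner_deriv: "\<And>v. ((\<bullet>) w has_derivative (\<bullet>) w) (at v)"
    by (intro derivative_eq_intros) auto
  have "w \<bullet> phi t = w \<bullet> phi 0"
  proof (rule DERIV_isconst2[of 0 t])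
    show "continuous_on {0..t} (\<lambda>s. w \<bullet> phi s)"
      using is_solution_compose_continuous_on[OF assms(2) inner_deriv]
      by (rule continuous_on_subset) auto
    show "((\<lambda>s. w \<bullet> phi s) has_real_derivative 0) (at s)" if "0 < s" for s
      using is_solution_compose_has_real_derivative[OF assms(2) that inner_deriv]
        inner_fld_eq_0[OF assms(1)] by simp
  qed (use False assms(3) in auto)
  then show ?thesis using assms(2) by (simp add: is_solution_def)
qed

section \<open>Quadratic Lyapunov functions\<close>

lemma first_crossing:
  fixes g :: "real \<Rightarrow> real"
  assumes "continuous_on {a..b} g" and "g a < y" and "y \<le> g b" and "a \<le> b"
  shows "\<exists>t1\<in>{a<..b}. y \<le> g t1 \<and> (\<forall>t\<in>{a..<t1}. g t < y)"
proof -
  define S where "S = {a..b} \<inter> g -` {y..}"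
  have "closed S"
    unfolding S_def using assms(1) by (rule continuous_closed_preimage) auto
  moreover have "bdd_below S" and "b \<in> S"
    using assms(3,4) by (auto simp: S_def intro: bdd_belowI[of _ a])
  ultimately have "Inf S \<in> S"
    using closed_contains_Inf by blast
  moreover have "g t < y" if "a \<le> t" "t < Inf S" for t
  proof -
    have "t \<le> b"
      using that cInf_lower[OF \<open>b \<in> S\<close> \<open>bdd_below S\<close>] by simp
    moreover have "t \<notin> S"
      using that cInf_lower[OF _ \<open>bdd_below S\<close>, of t] by force
    ultimately show ?thesis
      using that by (auto simp: S_def)
  qed
  moreover have "Inf S \<noteq> a"
    using \<open>Inf S \<in> S\<close> assms(2) by (auto simp: S_def)
  ultimately show ?thesis
    by (intro bexI[of _ "Inf S"]) (auto simp: S_def)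
qed

locale quadratic_lyapunov =
  fixes k :: "nat \<Rightarrow> real" and xs :: "real^species"
    and V :: "real^species \<Rightarrow> real" and DV :: "real^species \<Rightarrow> real^species \<Rightarrow> real"
    and K :: "(real^species) set" and m M c r :: real
  assumes V_has_derivative: "\<And>v. (V has_derivative DV v) (at v)"
    and solution_in_K: "\<And>z phi t. z \<in> compat_class xs \<Longrightarrow> is_solution k phi z \<Longrightarrow> 0 \<le> t
      \<Longrightarrow> phi t - xs \<in> K"
    and constants_pos: "0 < m" "0 < M" "0 < c" "0 < r"
    and V_lower: "\<And>v. v \<in> K \<Longrightarrow> m * (norm v)\<^sup>2 \<le> V v"
    and V_upper: "\<And>v. v \<in> K \<Longrightarrow> V v \<le> M * (norm v)\<^sup>2"
    and V_decreasing: "\<And>v. v \<in> K \<Longrightarrow> norm v < r \<Longrightarrow> DV v (fld k (xs + v)) \<le> - c * (norm v)\<^sup>2"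
begin

lemma V_shifted_has_derivative: "((\<lambda>y. V (y - xs)) has_derivative DV (y - xs)) (at y)"
  using diff_chain_at[OF has_derivative_diff[OF has_derivative_ident has_derivative_const]
      V_has_derivative]
  by (simp add: o_def)

lemma V_solution_has_real_derivative:
  assumes "is_solution k phi z" and "0 < t"
  shows "((\<lambda>t. V (phi t - xs)) has_real_derivative DV (phi t - xs) (fld k (xs + (phi t - xs)))) (at t)"
  using is_solution_compose_has_real_derivative[OF assms V_shifted_has_derivative] by simp

lemma V_solution_continuous_on:
  assumes "is_solution k phi z"
  shows "continuous_on {0..} (\<lambda>t. V (phi t - xs))"
  using is_solution_compose_continuous_on[OF assms V_shifted_has_derivative] .

lemma V_solution_deriv_le:
  assumes "z \<in> compat_class xs" and "is_solution k phi z" and "0 < t" and "norm (phi t - xs) < r"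
  shows "DV (phi t - xs) (fld k (xs + (phi t - xs))) \<le> - c * (norm (phi t - xs))\<^sup>2"
  using V_decreasing[OF solution_in_K[OF assms(1,2)]] assms(3,4) by simp

lemma V_start_lt:
  assumes "z \<in> compat_class xs" and "is_solution k phi z"
    and "0 < \<rho>" and "dist z xs < \<rho> * sqrt (m / M)"
  shows "V (z - xs) < m * \<rho>\<^sup>2"
proof -
  have "z - xs \<in> K"
    using solution_in_K[OF assms(1,2), of 0] assms(2) by (simp add: is_solution_def)
  then have "V (z - xs) \<le> M * (norm (z - xs))\<^sup>2"
    by (rule V_upper)
  also have "\<dots> < M * (\<rho> * sqrt (m / M))\<^sup>2"
    using assms(4) constants_pos
    by (intro mult_strict_left_mono power_strict_mono) (auto simp: dist_norm)
  also have "\<dots> = m * \<rho>\<^sup>2"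
    using constants_pos by (simp add: power_mult_distrib)
  finally show ?thesis .
qed

lemma V_solution_mono:
  assumes z: "z \<in> compat_class xs" and sol: "is_solution k phi z" and "0 \<le> t"
    and near: "\<And>s. 0 \<le> s \<Longrightarrow> s < t \<Longrightarrow> norm (phi s - xs) < r"
  shows "V (phi t - xs) \<le> V (z - xs)"
proof -
  have "V (phi t - xs) \<le> V (phi 0 - xs)"
  proof (rule DERIV_nonpos_imp_decreasing_open[OF \<open>0 \<le> t\<close>])
    show "continuous_on {0..t} (\<lambda>t. V (phi t - xs))"
      using V_solution_continuous_on[OF sol] by (rule continuous_on_subset) auto
    show "\<exists>y. ((\<lambda>t. V (phi t - xs)) has_real_derivative y) (at s) \<and> y \<le> 0"
      if "0 < s" "s < t" for s
    proof (intro exI conjI)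
      have "DV (phi s - xs) (fld k (xs + (phi s - xs))) \<le> - c * (norm (phi s - xs))\<^sup>2"
        using V_solution_deriv_le[OF z sol \<open>0 < s\<close>] near that by simp
      also have "\<dots> \<le> 0"
        using constants_pos by simp
      finally show "DV (phi s - xs) (fld k (xs + (phi s - xs))) \<le> 0" .
    qed (rule V_solution_has_real_derivative[OF sol \<open>0 < s\<close>])
  qed
  then show ?thesis
    using sol by (simp add: is_solution_def)
qed

lemma solution_stays_near:
  assumes z: "z \<in> compat_class xs" and sol: "is_solution k phi z"
    and \<rho>: "0 < \<rho>" "\<rho> \<le> r" and "dist z xs < \<rho> * sqrt (m / M)" and "0 \<le> t"
  shows "norm (phi t - xs) < \<rho>"
proof (rule ccontr)
  assume far: "\<not> ?thesis"
  have V_start: "V (z - xs) < m * \<rho>\<^sup>2"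
    using V_start_lt z sol \<rho>(1) \<open>dist z xs < \<rho> * sqrt (m / M)\<close> .
  have phi0: "phi 0 = z"
    using sol by (simp add: is_solution_def)
  have "m * (norm (z - xs))\<^sup>2 < m * \<rho>\<^sup>2"
    using V_lower[OF solution_in_K[OF z sol order_refl]] V_start phi0 by simp
  then have "norm (phi 0 - xs) < \<rho>"
    using constants_pos \<rho> phi0 by (simp add: power_less_imp_less_base)
  moreover have "continuous_on {0..t} (\<lambda>t. norm (phi t - xs))"
    using is_solution_continuous_on[OF sol]
    by (intro continuous_intros) (auto elim: continuous_on_subset)
  ultimately obtain t1 where t1: "0 < t1" "\<rho> \<le> norm (phi t1 - xs)"
    and before: "\<And>s. 0 \<le> s \<Longrightarrow> s < t1 \<Longrightarrow> norm (phi s - xs) < \<rho>"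
    using first_crossing[of 0 t "\<lambda>t. norm (phi t - xs)" \<rho>] far \<open>0 \<le> t\<close> by auto
  have "norm (phi s - xs) < r" if "0 \<le> s" "s < t1" for s
    using before[OF that] \<rho>(2) by simp
  then have "V (phi t1 - xs) \<le> V (z - xs)"
    using V_solution_mono[OF z sol] t1(1) by simp
  moreover have "m * \<rho>\<^sup>2 \<le> V (phi t1 - xs)"
    using V_lower[OF solution_in_K[OF z sol]] t1 \<rho> constants_pos
    by (smt (verit) mult_left_mono power_mono)
  ultimately show False
    using V_start by simp
qed

lemma V_exp_decay:
  assumes z: "z \<in> compat_class xs" and sol: "is_solution k phi z"
    and near: "\<And>t. 0 \<le> t \<Longrightarrow> norm (phi t - xs) < r" and "0 \<le> t"
  shows "V (phi t - xs) \<le> V (z - xs) * exp (- (c / M) * t)"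
proof -
  define \<alpha> where "\<alpha> = c / M"
  define W where "W s = exp (\<alpha> * s) * V (phi s - xs)" for s
  define W' where "W' s = exp (\<alpha> * s) * (\<alpha> * V (phi s - xs) + DV (phi s - xs) (fld k (xs + (phi s - xs))))"
    for s
  have "W t \<le> W 0"
  proof (rule DERIV_nonpos_imp_decreasing_open[OF \<open>0 \<le> t\<close>])
    show "continuous_on {0..t} W"
      unfolding W_def using V_solution_continuous_on[OF sol]
      by (intro continuous_intros) (auto elim: continuous_on_subset)
    show "\<exists>y. (W has_real_derivative y) (at s) \<and> y \<le> 0" if "0 < s" "s < t" for s
    proof (intro exI conjI)
      show "(W has_real_derivative W' s) (at s)"
        unfolding W_def W'_def using V_solution_has_real_derivative[OF sol \<open>0 < s\<close>]
        by (auto intro!: derivative_eq_intros simp: algebra_simps)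
      have "phi s - xs \<in> K"
        using solution_in_K[OF z sol] that by simp
      then have "\<alpha> * V (phi s - xs) \<le> c * (norm (phi s - xs))\<^sup>2"
        using V_upper constants_pos by (simp add: \<alpha>_def field_simps)
      moreover have "DV (phi s - xs) (fld k (xs + (phi s - xs))) \<le> - c * (norm (phi s - xs))\<^sup>2"
        using V_solution_deriv_le[OF z sol \<open>0 < s\<close>] near[of s] that by simp
      ultimately show "W' s \<le> 0"
        unfolding W'_def by (simp add: mult_nonneg_nonpos)
    qed
  qed
  moreover have "phi 0 = z"
    using sol by (simp add: is_solution_def)
  ultimately show ?thesis
    by (simp add: W_def \<alpha>_def exp_minus field_simps)
qed

lemma stable:
  assumes "0 < \<epsilon>"
  shows "\<exists>\<delta>>0. \<forall>z phi. z \<in> compat_class xs \<and> dist z xs < \<delta> \<and> is_solution k phi z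
    \<longrightarrow> (\<forall>t\<ge>0. dist (phi t) xs < \<epsilon>)"
proof (intro exI[of _ "min \<epsilon> r * sqrt (m / M)"] conjI allI impI)
  show "0 < min \<epsilon> r * sqrt (m / M)"
    using assms constants_pos by simp
  fix z phi and t :: real
  assume "z \<in> compat_class xs \<and> dist z xs < min \<epsilon> r * sqrt (m / M) \<and> is_solution k phi z"
    and "0 \<le> t"
  moreover have "0 < min \<epsilon> r" and "min \<epsilon> r \<le> r"
    using assms constants_pos by auto
  ultimately have "norm (phi t - xs) < min \<epsilon> r"
    using solution_stays_near by blast
  then show "dist (phi t) xs < \<epsilon>"
    by (simp add: dist_norm)
qed

lemma attractive:
  "\<exists>\<delta>>0. \<forall>z phi. z \<in> compat_class xs \<and> dist z xs < \<delta> \<and> is_solution k phi z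
    \<longrightarrow> (phi \<longlongrightarrow> xs) at_top"
proof (intro exI[of _ "r * sqrt (m / M)"] conjI allI impI)
  show "0 < r * sqrt (m / M)"
    using constants_pos by simp
  fix z phi
  assume "z \<in> compat_class xs \<and> dist z xs < r * sqrt (m / M) \<and> is_solution k phi z"
  then have z: "z \<in> compat_class xs" and sol: "is_solution k phi z"
    and close: "dist z xs < r * sqrt (m / M)"
    by auto
  have near: "norm (phi t - xs) < r" if "0 \<le> t" for t
    using solution_stays_near[OF z sol _ order_refl close that] constants_pos by simp
  define bound where "bound t = sqrt (V (z - xs) * exp (- (c / M) * t) / m)" for t
  have "norm (phi t - xs) \<le> bound t" if "0 \<le> t" for t
  proof -
    have "(norm (phi t - xs))\<^sup>2 * m \<le> V (z - xs) * exp (- (c / M) * t)"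
      using V_lower[OF solution_in_K[OF z sol that]] V_exp_decay[OF z sol near that]
      by (simp add: mult.commute)
    then have "(norm (phi t - xs))\<^sup>2 \<le> V (z - xs) * exp (- (c / M) * t) / m"
      using constants_pos by (simp add: pos_le_divide_eq)
    then show ?thesis
      unfolding bound_def by (rule real_le_rsqrt)
  qed
  then have "\<forall>\<^sub>F t in at_top. norm (phi t - xs) \<le> bound t"
    using eventually_ge_at_top[of 0] by (rule eventually_mono[rotated])
  moreover have "(bound \<longlongrightarrow> 0) at_top"
  proof -
    have "filterlim (\<lambda>t. - (c / M) * t) at_bot at_top"
      using constants_pos
      by (intro filterlim_tendsto_neg_mult_at_bot[OF tendsto_const]) (auto intro: filterlim_ident)
    then have "((\<lambda>t. exp (- (c / M) * t)) \<longlongrightarrow> 0) at_top"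
      using filterlim_compose[OF exp_at_bot] by (simp add: o_def)
    then have "((\<lambda>t. V (z - xs) * exp (- (c / M) * t) / m) \<longlongrightarrow> 0) at_top"
      by (intro tendsto_divide_zero tendsto_mult_right_zero)
    from tendsto_real_sqrt[OF this] show ?thesis
      unfolding bound_def by simp
  qed
  ultimately have "((\<lambda>t. phi t - xs) \<longlongrightarrow> 0) at_top"
    by (rule Lim_null_comparison)
  then show "(phi \<longlongrightarrow> xs) at_top"
    by (simp add: LIM_zero_iff)
qed

theorem asympt_stable: "asympt_stable k xs"
  unfolding asympt_stable_def using stable attractive by blast

end

section \<open>Quadratic forms\<close>

definition qform :: "('n::finite \<Rightarrow> 'n \<Rightarrow> real) \<Rightarrow> real^'n \<Rightarrow> real" where
  "qform Q v = (\<Sum>a\<in>UNIV. \<Sum>b\<in>UNIV. Q a b * v$a * v$b)"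

definition qform_deriv :: "('n::finite \<Rightarrow> 'n \<Rightarrow> real) \<Rightarrow> real^'n \<Rightarrow> real^'n \<Rightarrow> real" where
  "qform_deriv Q v h = (\<Sum>a\<in>UNIV. \<Sum>b\<in>UNIV. Q a b * (h$a * v$b + v$a * h$b))"

lemma has_derivative_qform: "(qform Q has_derivative qform_deriv Q v) (at v)"
proof -
  have component: "((\<lambda>x. x $ a) has_derivative (\<lambda>h. h $ a)) (at v)" for a
    using bounded_linear_vec_nth by (rule bounded_linear.has_derivative[OF _ has_derivative_ident])
  show ?thesis
    unfolding qform_def[abs_def] qform_deriv_def
    by (rule has_derivative_eq_rhs, (rule derivative_intros component)+, auto simp: algebra_simps)
qed

lemma qform_deriv_symmetric:
  assumes "\<And>a b. Q a b = Q b a"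
  shows "qform_deriv Q v h = 2 * (\<Sum>a\<in>UNIV. \<Sum>b\<in>UNIV. Q a b * v$b * h$a)"
proof -
  have "(\<Sum>a\<in>UNIV. \<Sum>b\<in>UNIV. Q a b * v$a * h$b) = (\<Sum>b\<in>UNIV. \<Sum>a\<in>UNIV. Q a b * v$a * h$b)"
    by (rule sum.swap)
  also have "\<dots> = (\<Sum>a\<in>UNIV. \<Sum>b\<in>UNIV. Q a b * v$b * h$a)"
    using assms by (simp add: mult.commute)
  finally show ?thesis
    by (simp add: qform_deriv_def algebra_simps sum.distrib)
qed

lemma qform_gram_plus_diag:
  fixes R :: "'k::finite \<Rightarrow> 'n::finite \<Rightarrow> real"
  assumes "\<And>a b. Q a b = (\<Sum>j\<in>UNIV. R j a * R j b) + (if a = b \<and> a \<in> S then \<mu> else 0)"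
  shows "qform Q v = (\<Sum>j\<in>UNIV. (\<Sum>a\<in>UNIV. R j a * v$a)\<^sup>2) + \<mu> * (\<Sum>a\<in>S. (v$a)\<^sup>2)"
proof -
  have "(\<Sum>a\<in>UNIV. \<Sum>b\<in>UNIV. (\<Sum>j\<in>UNIV. R j a * R j b) * v$a * v$b)
      = (\<Sum>a\<in>UNIV. \<Sum>b\<in>UNIV. \<Sum>j\<in>UNIV. (R j a * v$a) * (R j b * v$b))"
    unfolding sum_distrib_right by (simp add: mult_ac)
  also have "\<dots> = (\<Sum>j\<in>UNIV. \<Sum>a\<in>UNIV. \<Sum>b\<in>UNIV. (R j a * v$a) * (R j b * v$b))"
    by (subst sum.swap, subst (2) sum.swap) (rule refl)
  also have "\<dots> = (\<Sum>j\<in>UNIV. (\<Sum>a\<in>UNIV. R j a * v$a)\<^sup>2)"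
    by (simp add: power2_eq_square sum_product)
  finally have gram: "(\<Sum>a\<in>UNIV. \<Sum>b\<in>UNIV. (\<Sum>j\<in>UNIV. R j a * R j b) * v$a * v$b)
      = (\<Sum>j\<in>UNIV. (\<Sum>a\<in>UNIV. R j a * v$a)\<^sup>2)" .
  have "(\<Sum>b\<in>UNIV. (if a = b \<and> a \<in> S then \<mu> else 0) * v$a * v$b)
      = (\<Sum>b\<in>UNIV. if b = a then (if a \<in> S then \<mu> * (v$a)\<^sup>2 else 0) else 0)" for a
    by (rule sum.cong) (auto simp: power2_eq_square)
  then have "(\<Sum>b\<in>UNIV. (if a = b \<and> a \<in> S then \<mu> else 0) * v$a * v$b)
      = (if a \<in> S then \<mu> * (v$a)\<^sup>2 else 0)" for a
    by simp
  then have diag: "(\<Sum>a\<in>UNIV. \<Sum>b\<in>UNIV. (if a = b \<and> a \<in> S then \<mu> else 0) * v$a * v$b)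
      = \<mu> * (\<Sum>a\<in>S. (v$a)\<^sup>2)"
    by (simp add: sum.If_cases sum_distrib_left)
  show ?thesis
    using gram diag by (simp add: qform_def assms algebra_simps sum.distrib)
qed

lemma qform_le_norm:
  fixes Q :: "'n::finite \<Rightarrow> 'n \<Rightarrow> real" and qm :: real
  assumes "\<And>a b. \<bar>Q a b\<bar> \<le> qm"
  shows "qform Q v \<le> real (CARD('n)\<^sup>2) * qm * (norm v)\<^sup>2"
proof -
  have "Q a b * v$a * v$b \<le> qm * (norm v)\<^sup>2" for a b
  proof -
    have "Q a b * v$a * v$b \<le> \<bar>Q a b\<bar> * \<bar>v$a\<bar> * \<bar>v$b\<bar>"
      by (metis abs_ge_self abs_mult)
    also have "\<dots> \<le> qm * norm v * norm v"
      using assms[of a b] by (intro mult_mono component_le_norm_cart) auto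
    finally show ?thesis
      by (simp add: power2_eq_square mult.assoc)
  qed
  then have "qform Q v \<le> (\<Sum>a\<in>(UNIV::'n set). \<Sum>b\<in>(UNIV::'n set). qm * (norm v)\<^sup>2)"
    unfolding qform_def by (intro sum_mono)
  then show ?thesis
    by (simp add: power2_eq_square)
qed

lemma bilinear_abs_le:
  fixes Q :: "'n::finite \<Rightarrow> 'n \<Rightarrow> real" and qm :: real
  assumes "\<And>a b. \<bar>Q a b\<bar> \<le> qm" and "\<And>a. \<bar>g a\<bar> \<le> G"
  shows "\<bar>\<Sum>a\<in>UNIV. \<Sum>b\<in>UNIV. Q a b * v$b * g a\<bar> \<le> real (CARD('n)\<^sup>2) * qm * norm v * G"
proof -
  have "\<bar>Q a b * v$b * g a\<bar> \<le> qm * norm v * G" for a b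
    unfolding abs_mult using assms(1)[of a b]
    by (intro mult_mono assms(2) component_le_norm_cart mult_nonneg_nonneg) auto
  then have "\<bar>\<Sum>a\<in>UNIV. \<Sum>b\<in>UNIV. Q a b * v$b * g a\<bar>
      \<le> (\<Sum>a\<in>(UNIV::'n set). \<Sum>b\<in>(UNIV::'n set). qm * norm v * G)"
    by (intro order_trans[OF sum_abs] sum_mono order_trans[OF sum_abs]) auto
  then show ?thesis
    by (simp add: power2_eq_square)
qed

lemma qform_symmetric_le_diag_dominance:
  fixes M :: "'n::finite \<Rightarrow> 'n \<Rightarrow> real"
  assumes "\<And>b c. M b c = M c b"
  shows "qform M v \<le> (\<Sum>b\<in>UNIV. (M b b + (\<Sum>c\<in>UNIV-{b}. \<bar>M b c\<bar>)) * (v$b)\<^sup>2)"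
proof -
  have off_diag: "M b c * v$b * v$c \<le> \<bar>M b c\<bar> * (v$b)\<^sup>2 / 2 + \<bar>M b c\<bar> * (v$c)\<^sup>2 / 2" for b c
  proof -
    have "M b c * v$b * v$c \<le> \<bar>M b c\<bar> * (\<bar>v$b\<bar> * \<bar>v$c\<bar>)"
      by (metis abs_ge_self abs_mult mult.assoc)
    also have "\<dots> \<le> \<bar>M b c\<bar> * (((v$b)\<^sup>2 + (v$c)\<^sup>2) / 2)"
      using sum_squares_bound[of "\<bar>v$b\<bar>" "\<bar>v$c\<bar>"] by (intro mult_left_mono) auto
    finally show ?thesis
      by (simp add: field_simps)
  qed
  have swap: "(\<Sum>b\<in>UNIV. \<Sum>c\<in>UNIV-{b}. \<bar>M b c\<bar> * (v$c)\<^sup>2)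
      = (\<Sum>b\<in>UNIV. \<Sum>c\<in>UNIV-{b}. \<bar>M b c\<bar> * (v$b)\<^sup>2)"
  proof -
    have "(\<Sum>b\<in>UNIV. \<Sum>c\<in>UNIV-{b}. \<bar>M b c\<bar> * (v$c)\<^sup>2)
        = (\<Sum>b\<in>UNIV. \<Sum>c\<in>UNIV. if c = b then 0 else \<bar>M b c\<bar> * (v$c)\<^sup>2)"
      by (simp add: sum.If_cases Diff_eq)
    also have "\<dots> = (\<Sum>c\<in>UNIV. \<Sum>b\<in>UNIV. if c = b then 0 else \<bar>M b c\<bar> * (v$c)\<^sup>2)"
      by (rule sum.swap)
    also have "\<dots> = (\<Sum>b\<in>UNIV. \<Sum>c\<in>UNIV. if c = b then 0 else \<bar>M b c\<bar> * (v$b)\<^sup>2)"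
      using assms by (intro sum.cong refl) auto
    also have "\<dots> = (\<Sum>b\<in>UNIV. \<Sum>c\<in>UNIV-{b}. \<bar>M b c\<bar> * (v$b)\<^sup>2)"
      by (simp add: sum.If_cases Diff_eq)
    finally show ?thesis .
  qed
  have "(\<Sum>c\<in>UNIV. M b c * v$b * v$c) = M b b * (v$b)\<^sup>2 + (\<Sum>c\<in>UNIV-{b}. M b c * v$b * v$c)"
    for b
    by (simp add: sum.remove[of UNIV b] power2_eq_square)
  then have "qform M v = (\<Sum>b\<in>UNIV. M b b * (v$b)\<^sup>2 + (\<Sum>c\<in>UNIV-{b}. M b c * v$b * v$c))"
    by (simp add: qform_def)
  also have "\<dots> \<le> (\<Sum>b\<in>UNIV. M b b * (v$b)\<^sup>2
      + (\<Sum>c\<in>UNIV-{b}. \<bar>M b c\<bar> * (v$b)\<^sup>2 / 2 + \<bar>M b c\<bar> * (v$c)\<^sup>2 / 2))"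
    by (intro sum_mono add_left_mono off_diag)
  also have "\<dots> = (\<Sum>b\<in>UNIV. (M b b + (\<Sum>c\<in>UNIV-{b}. \<bar>M b c\<bar>)) * (v$b)\<^sup>2)"
    using swap by (simp add: sum.distrib sum_divide_distrib[symmetric] algebra_simps sum_distrib_left)
  finally show ?thesis .
qed

lemma qform_symmetrize: "qform N v = qform (\<lambda>b c. (N b c + N c b) / 2) v"
proof -
  have "(\<Sum>b\<in>UNIV. \<Sum>c\<in>UNIV. N c b * v$b * v$c) = qform N v"
    unfolding qform_def by (subst sum.swap) (simp add: mult_ac)
  then show ?thesis
    by (simp add: qform_def algebra_simps sum.distrib sum_divide_distrib[symmetric] add_divide_distrib)
qed

lemma qform_le_of_diag_dominance:
  fixes N :: "'n::finite \<Rightarrow> 'n \<Rightarrow> real"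
  assumes "\<And>b. N b b + (\<Sum>c\<in>UNIV-{b}. \<bar>N b c + N c b\<bar> / 2) \<le> (if b \<in> F then -1 else 0)"
  shows "qform N v \<le> - (\<Sum>b\<in>F. (v$b)\<^sup>2)"
proof -
  define M where "M b c = (N b c + N c b) / 2" for b c
  have "qform N v = qform M v"
    unfolding M_def by (rule qform_symmetrize)
  also have "\<dots> \<le> (\<Sum>b\<in>UNIV. (M b b + (\<Sum>c\<in>UNIV-{b}. \<bar>M b c\<bar>)) * (v$b)\<^sup>2)"
    by (rule qform_symmetric_le_diag_dominance) (simp add: M_def add.commute)
  also have "\<dots> \<le> (\<Sum>b\<in>UNIV. (if b \<in> F then -1 else 0) * (v$b)\<^sup>2)"
    using assms by (intro sum_mono mult_right_mono) (simp_all add: M_def abs_divide sum_divide_distrib)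
  also have "\<dots> = (\<Sum>b\<in>UNIV. if b \<in> F then - (v$b)\<^sup>2 else 0)"
    by (intro sum.cong) auto
  also have "\<dots> = - (\<Sum>b\<in>F. (v$b)\<^sup>2)"
    by (simp add: sum.If_cases sum_negf)
  finally show ?thesis .
qed

lemma bilinear_product_eq_qform:
  fixes Q A N :: "'n::finite \<Rightarrow> 'n \<Rightarrow> real"
  assumes "\<And>b c. 2 * (\<Sum>a\<in>UNIV. Q a b * A a c) = N b c"
  shows "2 * (\<Sum>a\<in>UNIV. \<Sum>b\<in>UNIV. Q a b * v$b * (\<Sum>c\<in>UNIV. A a c * v$c)) = qform N v"
proof -
  have "(\<Sum>a\<in>UNIV. \<Sum>b\<in>UNIV. Q a b * v$b * (\<Sum>c\<in>UNIV. A a c * v$c))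
      = (\<Sum>a\<in>UNIV. \<Sum>b\<in>UNIV. \<Sum>c\<in>UNIV. Q a b * A a c * v$b * v$c)"
    by (simp add: sum_distrib_left mult_ac)
  also have "\<dots> = (\<Sum>b\<in>UNIV. \<Sum>c\<in>UNIV. \<Sum>a\<in>UNIV. Q a b * A a c * v$b * v$c)"
    by (subst sum.swap, subst (2) sum.swap) (rule refl)
  also have "\<dots> = (\<Sum>b\<in>UNIV. \<Sum>c\<in>UNIV. (\<Sum>a\<in>UNIV. Q a b * A a c) * v$b * v$c)"
    by (simp add: sum_distrib_right)
  finally have sum_eq: "(\<Sum>a\<in>UNIV. \<Sum>b\<in>UNIV. Q a b * v$b * (\<Sum>c\<in>UNIV. A a c * v$c))
      = (\<Sum>b\<in>UNIV. \<Sum>c\<in>UNIV. (\<Sum>a\<in>UNIV. Q a b * A a c) * v$b * v$c)" .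
  have qform_eq: "qform N v = (\<Sum>b\<in>UNIV. \<Sum>c\<in>UNIV. 2 * ((\<Sum>a\<in>UNIV. Q a b * A a c) * v$b * v$c))"
    unfolding qform_def by (intro sum.cong refl) (simp flip: assms)
  show ?thesis
    unfolding sum_eq qform_eq by (simp only: sum_distrib_left)
qed

section \<open>The ERK network\<close>

lemma length_erk_reactions: "length erk_reactions = 30"
  by (simp add: erk_reactions_def)

lemma upt_30: "[0..<30] = [0,1,2,3,4,5,6,7,8,9,10,11,12,13,14,15,16,17,18,19,20,21,22,23,24,25,26,27,28,29]"
  by (simp add: upt_rec numeral_eq_Suc)

lemma sum_lessThan_30: "(\<Sum>i<30. f i) = (\<Sum>i\<leftarrow>[0..<30]. f i)"
  by (simp add: sum_set_upt_conv_sum_list_nat[symmetric] atLeast_upt)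

lemma less_30_iff: "i < 30 \<longleftrightarrow> i \<in> set [0..<30]"
  by simp

lemma sum_UNIV_species:
  "(\<Sum>s\<in>UNIV. f s) = f RAF + f pRAF + f MEK + f pMEK + f ppMEK + f ERK + f pERK + f ppERK + f RAS
     + f RAFPH + f PH + f RAS_RAF + f MEK_pRAF + f pMEK_pRAF + f ERK_ppMEK + f pERK_ppMEK
     + f RAF_RAFPH + f ppMEK_PH + f pMEK_PH + f ppERK_PH + f pERK_PH"
  by (simp add: UNIV_species add.assoc)

lemma CARD_species: "CARD(species) = 21"
  by (simp add: UNIV_species)

lemma prod_power_count_list: "(\<Prod>s\<in>UNIV. (x $ s) ^ count_list ys s) = (\<Prod>s\<leftarrow>ys. x $ s)"
proof (induction ys)
  case (Cons a ys)
  have "(\<Prod>s\<in>UNIV. (x $ s) ^ count_list (a # ys) s)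
      = (\<Prod>s\<in>UNIV. (x $ s) ^ (if a = s then 1 else 0) * (x $ s) ^ count_list ys s)"
    by (rule prod.cong) (auto simp: power_add)
  also have "\<dots> = (\<Prod>s\<in>UNIV. (x $ s) ^ (if a = s then 1 else 0)) * (\<Prod>s\<in>UNIV. (x $ s) ^ count_list ys s)"
    by (rule prod.distrib)
  also have "(\<Prod>s\<in>UNIV. (x $ s) ^ (if a = s then 1 else 0)) = x $ a"
    by (simp add: if_distrib prod.If_cases)
  finally show ?case
    using Cons by simp
qed simp

lemma rmono_eq_prod_list: "rmono i x = (\<Prod>s\<leftarrow>fst (erk_reactions ! i). x $ s)"
  by (simp add: rmono_def cplx_def prod_power_count_list)

lemma fld_nth_eq_sum_list: "fld k x $ s = (\<Sum>i\<leftarrow>[0..<30]. k i * rmono i x * rvec i $ s)"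
  unfolding sum_lessThan_30[symmetric] by (simp add: fld_def length_erk_reactions)

lemma fld_nth:
    "fld k x $ RAF = - k 0 * (x$RAF * x$RAS) + k 1 * (x$RAS_RAF) + k 5 * (x$RAF_RAFPH)"
    "fld k x $ pRAF = k 2 * (x$RAS_RAF) - k 3 * (x$pRAF * x$RAFPH) + k 4 * (x$RAF_RAFPH)
      - k 6 * (x$MEK * x$pRAF) + k 7 * (x$MEK_pRAF) + k 8 * (x$MEK_pRAF) - k 9 * (x$pMEK * x$pRAF)
      + k 10 * (x$pMEK_pRAF) + k 11 * (x$pMEK_pRAF)"
    "fld k x $ MEK = - k 6 * (x$MEK * x$pRAF) + k 7 * (x$MEK_pRAF) + k 17 * (x$pMEK_PH)"
    "fld k x $ pMEK = k 8 * (x$MEK_pRAF) - k 9 * (x$pMEK * x$pRAF) + k 10 * (x$pMEK_pRAF)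
      + k 14 * (x$ppMEK_PH) - k 15 * (x$pMEK * x$PH) + k 16 * (x$pMEK_PH)"
    "fld k x $ ppMEK = k 11 * (x$pMEK_pRAF) - k 12 * (x$ppMEK * x$PH) + k 13 * (x$ppMEK_PH)
      - k 18 * (x$ERK * x$ppMEK) + k 19 * (x$ERK_ppMEK) + k 20 * (x$ERK_ppMEK)
      - k 21 * (x$pERK * x$ppMEK) + k 22 * (x$pERK_ppMEK) + k 23 * (x$pERK_ppMEK)"
    "fld k x $ ERK = - k 18 * (x$ERK * x$ppMEK) + k 19 * (x$ERK_ppMEK) + k 29 * (x$pERK_PH)"
    "fld k x $ pERK = k 20 * (x$ERK_ppMEK) - k 21 * (x$pERK * x$ppMEK) + k 22 * (x$pERK_ppMEK)
      + k 26 * (x$ppERK_PH) - k 27 * (x$pERK * x$PH) + k 28 * (x$pERK_PH)"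
    "fld k x $ ppERK = k 23 * (x$pERK_ppMEK) - k 24 * (x$ppERK * x$PH) + k 25 * (x$ppERK_PH)"
    "fld k x $ RAS = - k 0 * (x$RAF * x$RAS) + k 1 * (x$RAS_RAF) + k 2 * (x$RAS_RAF)"
    "fld k x $ RAFPH = - k 3 * (x$pRAF * x$RAFPH) + k 4 * (x$RAF_RAFPH) + k 5 * (x$RAF_RAFPH)"
    "fld k x $ PH = - k 12 * (x$ppMEK * x$PH) + k 13 * (x$ppMEK_PH) + k 14 * (x$ppMEK_PH)
      - k 15 * (x$pMEK * x$PH) + k 16 * (x$pMEK_PH) + k 17 * (x$pMEK_PH) - k 24 * (x$ppERK * x$PH)
      + k 25 * (x$ppERK_PH) + k 26 * (x$ppERK_PH) - k 27 * (x$pERK * x$PH) + k 28 * (x$pERK_PH)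
      + k 29 * (x$pERK_PH)"
    "fld k x $ RAS_RAF = k 0 * (x$RAF * x$RAS) - k 1 * (x$RAS_RAF) - k 2 * (x$RAS_RAF)"
    "fld k x $ MEK_pRAF = k 6 * (x$MEK * x$pRAF) - k 7 * (x$MEK_pRAF) - k 8 * (x$MEK_pRAF)"
    "fld k x $ pMEK_pRAF = k 9 * (x$pMEK * x$pRAF) - k 10 * (x$pMEK_pRAF) - k 11 * (x$pMEK_pRAF)"
    "fld k x $ ERK_ppMEK = k 18 * (x$ERK * x$ppMEK) - k 19 * (x$ERK_ppMEK) - k 20 * (x$ERK_ppMEK)"
    "fld k x $ pERK_ppMEK = k 21 * (x$pERK * x$ppMEK) - k 22 * (x$pERK_ppMEK)
      - k 23 * (x$pERK_ppMEK)"
    "fld k x $ RAF_RAFPH = k 3 * (x$pRAF * x$RAFPH) - k 4 * (x$RAF_RAFPH) - k 5 * (x$RAF_RAFPH)"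
    "fld k x $ ppMEK_PH = k 12 * (x$ppMEK * x$PH) - k 13 * (x$ppMEK_PH) - k 14 * (x$ppMEK_PH)"
    "fld k x $ pMEK_PH = k 15 * (x$pMEK * x$PH) - k 16 * (x$pMEK_PH) - k 17 * (x$pMEK_PH)"
    "fld k x $ ppERK_PH = k 24 * (x$ppERK * x$PH) - k 25 * (x$ppERK_PH) - k 26 * (x$ppERK_PH)"
    "fld k x $ pERK_PH = k 27 * (x$pERK * x$PH) - k 28 * (x$pERK_PH) - k 29 * (x$pERK_PH)"
  unfolding fld_nth_eq_sum_list rmono_eq_prod_list rvec_def cplx_def
  by (simp_all add: erk_reactions_def upt_30 algebra_simps)

definition cons_laws :: "species list list" where
  "cons_laws = [[RAS, RAS_RAF], [RAFPH, RAF_RAFPH],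
     [RAF, pRAF, RAS_RAF, RAF_RAFPH, MEK_pRAF, pMEK_pRAF],
     [MEK, pMEK, ppMEK, MEK_pRAF, pMEK_pRAF, ppMEK_PH, pMEK_PH, ERK_ppMEK, pERK_ppMEK],
     [ERK, pERK, ppERK, ERK_ppMEK, pERK_ppMEK, ppERK_PH, pERK_PH],
     [PH, ppMEK_PH, pMEK_PH, ppERK_PH, pERK_PH]]"

definition total_vec :: "species list \<Rightarrow> real^species" where
  "total_vec L = (\<chi> s. if s \<in> set L then 1 else 0)"

definition cons_kernel :: "(real^species) set" where
  "cons_kernel = {v. \<forall>L\<in>set cons_laws. total_vec L \<bullet> v = 0}"

lemma inner_total_vec: "total_vec L \<bullet> v = (\<Sum>s\<in>set L. v$s)"
proof -
  have "total_vec L \<bullet> v = (\<Sum>s\<in>UNIV. if s \<in> set L then v$s else 0)"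
    by (simp add: total_vec_def inner_vec_def) (rule sum.cong, auto)
  then show ?thesis
    by (simp add: sum.If_cases Int_absorb1)
qed

lemma inner_total_vec_rvec:
  "L \<in> set cons_laws \<Longrightarrow> i < length erk_reactions \<Longrightarrow> total_vec L \<bullet> rvec i = 0"
  unfolding length_erk_reactions less_30_iff upt_30 inner_total_vec rvec_def cplx_def
  by (auto simp: cons_laws_def erk_reactions_def)

lemma mem_cons_kernel_iff:
  "v \<in> cons_kernel \<longleftrightarrow>
    v$RAS = - v$RAS_RAF \<and> v$RAFPH = - v$RAF_RAFPH \<and>
    v$RAF = - (v$pRAF + v$RAS_RAF + v$RAF_RAFPH + v$MEK_pRAF + v$pMEK_pRAF) \<and>
    v$MEK = - (v$pMEK + v$ppMEK + v$MEK_pRAF + v$pMEK_pRAF + v$ppMEK_PH + v$pMEK_PH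
      + v$ERK_ppMEK + v$pERK_ppMEK) \<and>
    v$ERK = - (v$pERK + v$ppERK + v$ERK_ppMEK + v$pERK_ppMEK + v$ppERK_PH + v$pERK_PH) \<and>
    v$PH = - (v$ppMEK_PH + v$pMEK_PH + v$ppERK_PH + v$pERK_PH)"
  by (simp add: cons_kernel_def cons_laws_def inner_total_vec) (auto simp: algebra_simps)

lemma solution_minus_in_cons_kernel:
  assumes "z \<in> compat_class xs" and "is_solution k phi z" and "0 \<le> t"
  shows "phi t - xs \<in> cons_kernel"
  unfolding cons_kernel_def
proof (intro CollectI ballI)
  fix L assume "L \<in> set cons_laws"
  then have "total_vec L \<bullet> (z - xs) = 0" and "total_vec L \<bullet> phi t = total_vec L \<bullet> z"
    using assms inner_stoich_eq_0 inner_solution_const inner_total_vec_rvec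
    by (auto simp: compat_class_def)
  then show "total_vec L \<bullet> (phi t - xs) = 0"
    by (simp add: inner_diff_right)
qed

definition free_species :: "species set" where
  "free_species = {pRAF, pMEK, ppMEK, pERK, ppERK, RAS_RAF, MEK_pRAF, pMEK_pRAF, ERK_ppMEK,
     pERK_ppMEK, RAF_RAFPH, ppMEK_PH, pMEK_PH, ppERK_PH, pERK_PH}"

lemma sq_le_of_eq_neg_sum_list:
  fixes x S :: real and f :: "'a \<Rightarrow> real"
  assumes "x = - (\<Sum>b\<leftarrow>bs. f b)" and "\<And>b. b \<in> set bs \<Longrightarrow> (f b)\<^sup>2 \<le> S" and "0 \<le> S"
  shows "x\<^sup>2 \<le> (length bs)\<^sup>2 * S"
proof -
  have "\<bar>\<Sum>b\<leftarrow>bs. f b\<bar> \<le> length bs * sqrt S"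
    using assms(2)
  proof (induction bs)
    case (Cons b bs)
    have "\<bar>f b\<bar> \<le> sqrt S"
      using Cons.prems by (simp add: real_le_rsqrt)
    moreover have "\<bar>\<Sum>b\<leftarrow>bs. f b\<bar> \<le> length bs * sqrt S"
      using Cons by simp
    ultimately show ?case
      using abs_triangle_ineq[of "f b" "\<Sum>b\<leftarrow>bs. f b"] by (simp add: distrib_right)
  qed simp
  then have "\<bar>x\<bar>\<^sup>2 \<le> (length bs * sqrt S)\<^sup>2"
    using assms(1) by (intro power_mono) simp_all
  also have "\<dots> = (length bs)\<^sup>2 * S"
    using assms(3) by (simp add: power_mult_distrib)
  finally show ?thesis
    by simp
qed

lemma norm_sq_le_free_species:
  assumes "v \<in> cons_kernel"
  shows "(norm v)\<^sup>2 \<le> 144 * (\<Sum>a\<in>free_species. (v$a)\<^sup>2)"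
proof -
  define S where "S = (\<Sum>a\<in>free_species. (v$a)\<^sup>2)"
  have "0 \<le> S"
    by (simp add: S_def sum_nonneg)
  have free: "(v$a)\<^sup>2 \<le> S" if "a \<in> free_species" for a
    unfolding S_def using that by (intro member_le_sum) (auto simp: free_species_def)
  have law: "v $ hd L = - (\<Sum>b\<leftarrow>tl L. v$b)" if "L \<in> set cons_laws" for L
  proof -
    have "distinct L" and "L \<noteq> []"
      using that by (auto simp: cons_laws_def)
    then have "(\<Sum>s\<in>set L. v$s) = v $ hd L + (\<Sum>b\<leftarrow>tl L. v$b)"
      by (cases L) (simp_all add: sum_list_distinct_conv_sum_set)
    moreover have "(\<Sum>s\<in>set L. v$s) = 0"
      using assms that by (simp add: cons_kernel_def inner_total_vec)
    ultimately show ?thesis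
      by simp
  qed
  have "(v $ hd L)\<^sup>2 \<le> (length (tl L))\<^sup>2 * S" if "L \<in> set cons_laws" for L
    using that by (intro sq_le_of_eq_neg_sum_list[OF law _ \<open>0 \<le> S\<close>] free)
      (auto simp: cons_laws_def free_species_def)
  then have "(\<Sum>L\<leftarrow>cons_laws. (v $ hd L)\<^sup>2) \<le> (\<Sum>L\<leftarrow>cons_laws. (length (tl L))\<^sup>2 * S)"
    by (rule sum_list_mono)
  also have "\<dots> = 143 * S"
    by (simp add: cons_laws_def)
  finally have "(\<Sum>L\<leftarrow>cons_laws. (v $ hd L)\<^sup>2) \<le> 143 * S" .
  moreover have "(norm v)\<^sup>2 = S + (\<Sum>L\<leftarrow>cons_laws. (v $ hd L)\<^sup>2)"
    unfolding power2_norm_eq_inner inner_vec_def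
    by (simp add: S_def sum_UNIV_species free_species_def cons_laws_def power2_eq_square)
  ultimately show ?thesis
    unfolding S_def by simp
qed

text \<open>No reactant complex has more than two molecules, so \<open>fld k (xs + v)\<close> is
  \<open>fld k xs\<close> plus a term linear in \<open>v\<close> plus \<open>fld_quad k v\<close>.\<close>

definition quad_monomial :: "species list \<Rightarrow> real^species \<Rightarrow> real" where
  "quad_monomial y v = (case y of [a, b] \<Rightarrow> v$a * v$b | _ \<Rightarrow> 0)"

definition fld_quad :: "(nat \<Rightarrow> real) \<Rightarrow> real^species \<Rightarrow> real^species" where
  "fld_quad k v = (\<Sum>i<30. (k i * quad_monomial (fst (erk_reactions ! i)) v) *\<^sub>R rvec i)"

lemma fld_quad_nth:
    "fld_quad k v $ RAF = - k 0 * (v$RAF * v$RAS)"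
    "fld_quad k v $ pRAF = - k 3 * (v$pRAF * v$RAFPH) - k 6 * (v$MEK * v$pRAF)
      - k 9 * (v$pMEK * v$pRAF)"
    "fld_quad k v $ MEK = - k 6 * (v$MEK * v$pRAF)"
    "fld_quad k v $ pMEK = - k 9 * (v$pMEK * v$pRAF) - k 15 * (v$pMEK * v$PH)"
    "fld_quad k v $ ppMEK = - k 12 * (v$ppMEK * v$PH) - k 18 * (v$ERK * v$ppMEK)
      - k 21 * (v$pERK * v$ppMEK)"
    "fld_quad k v $ ERK = - k 18 * (v$ERK * v$ppMEK)"
    "fld_quad k v $ pERK = - k 21 * (v$pERK * v$ppMEK) - k 27 * (v$pERK * v$PH)"
    "fld_quad k v $ ppERK = - k 24 * (v$ppERK * v$PH)"
    "fld_quad k v $ RAS = - k 0 * (v$RAF * v$RAS)"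
    "fld_quad k v $ RAFPH = - k 3 * (v$pRAF * v$RAFPH)"
    "fld_quad k v $ PH = - k 12 * (v$ppMEK * v$PH) - k 15 * (v$pMEK * v$PH)
      - k 24 * (v$ppERK * v$PH) - k 27 * (v$pERK * v$PH)"
    "fld_quad k v $ RAS_RAF = k 0 * (v$RAF * v$RAS)"
    "fld_quad k v $ MEK_pRAF = k 6 * (v$MEK * v$pRAF)"
    "fld_quad k v $ pMEK_pRAF = k 9 * (v$pMEK * v$pRAF)"
    "fld_quad k v $ ERK_ppMEK = k 18 * (v$ERK * v$ppMEK)"
    "fld_quad k v $ pERK_ppMEK = k 21 * (v$pERK * v$ppMEK)"
    "fld_quad k v $ RAF_RAFPH = k 3 * (v$pRAF * v$RAFPH)"
    "fld_quad k v $ ppMEK_PH = k 12 * (v$ppMEK * v$PH)"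
    "fld_quad k v $ pMEK_PH = k 15 * (v$pMEK * v$PH)"
    "fld_quad k v $ ppERK_PH = k 24 * (v$ppERK * v$PH)"
    "fld_quad k v $ pERK_PH = k 27 * (v$pERK * v$PH)"
  unfolding fld_quad_def quad_monomial_def rvec_def cplx_def sum_lessThan_30
  by (simp_all add: erk_reactions_def upt_30 algebra_simps)

lemma fld_quad_nth_abs_le:
  assumes "\<And>i. i < 30 \<Longrightarrow> 0 \<le> k i"
  shows "\<bar>fld_quad k v $ a\<bar> \<le> (\<Sum>i<30. k i) * (norm v)\<^sup>2"
proof -
  have monomial: "\<bar>quad_monomial y v\<bar> \<le> (norm v)\<^sup>2" for y
  proof -
    have "\<bar>v$a * v$b\<bar> \<le> (norm v)\<^sup>2" for a b
      unfolding abs_mult power2_eq_square by (intro mult_mono component_le_norm_cart) auto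
    then show ?thesis
      unfolding quad_monomial_def by (auto split: list.splits)
  qed
  have rvec: "\<bar>rvec i $ a\<bar> \<le> 1" if "i < 30" for i
    using that unfolding less_30_iff upt_30 rvec_def cplx_def
    by (cases a) (auto simp: erk_reactions_def)
  have "\<bar>fld_quad k v $ a\<bar> \<le> (\<Sum>i<30. \<bar>k i * quad_monomial (fst (erk_reactions ! i)) v * rvec i $ a\<bar>)"
    unfolding fld_quad_def by (simp add: sum_abs)
  also have "\<dots> \<le> (\<Sum>i<30. k i * (norm v)\<^sup>2)"
    using assms monomial rvec unfolding abs_mult
    by (intro sum_mono) (simp add: mult_le_one order_trans[OF mult_right_le_one_le] mult_left_mono)
  finally show ?thesis
    by (simp add: sum_distrib_right)
qed

section \<open>Lyapunov certificates for steady states\<close>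

text \<open>\<open>A\<close> is \<open>D\<close> times the Jacobian of the field at \<open>xs\<close>, read on the free species, and
  \<open>N = 2 Q A\<close>; to first order \<open>D\<close> times the derivative of \<open>qform Q\<close> along solutions is
  \<open>qform N\<close>.\<close>

locale erk_certificate =
  fixes k :: "nat \<Rightarrow> real" and xs :: "real^species"
    and A Q R N :: "species \<Rightarrow> species \<Rightarrow> real" and D \<mu> :: real
  assumes k_nonneg: "\<And>i. i < 30 \<Longrightarrow> 0 \<le> k i"
    and fld_expansion: "\<And>a v. a \<in> free_species \<Longrightarrow> v \<in> cons_kernel \<Longrightarrow>
      fld k (xs + v) $ a = (\<Sum>c\<in>UNIV. A a c * v$c) / D + fld_quad k v $ a"
    and D_pos: "0 < D"
    and Q_eq: "\<And>a b. Q a b = (\<Sum>j\<in>UNIV. R j a * R j b) + (if a = b \<and> a \<in> free_species then \<mu> else 0)"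
    and R_eq_0: "\<And>j a. a \<notin> free_species \<Longrightarrow> R j a = 0"
    and \<mu>_pos: "0 < \<mu>"
    and N_eq: "\<And>b c. 2 * (\<Sum>a\<in>UNIV. Q a b * A a c) = N b c"
    and N_diag_dominant:
      "\<And>b. N b b + (\<Sum>c\<in>UNIV-{b}. \<bar>N b c + N c b\<bar> / 2) \<le> (if b \<in> free_species then -1 else 0)"
begin

lemma Q_symmetric: "Q a b = Q b a"
  unfolding Q_eq by (auto simp: mult.commute)

lemma Q_eq_0: "a \<notin> free_species \<Longrightarrow> Q a b = 0"
  by (simp add: Q_eq R_eq_0)

definition qm :: real where
  "qm = 1 + (\<Sum>a\<in>UNIV. \<Sum>b\<in>UNIV. \<bar>Q a b\<bar>)"

lemma abs_Q_le: "\<bar>Q a b\<bar> \<le> qm"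
proof -
  have "\<bar>Q a b\<bar> \<le> (\<Sum>b\<in>UNIV. \<bar>Q a b\<bar>)"
    by (rule member_le_sum) auto
  also have "\<dots> \<le> (\<Sum>a\<in>UNIV. \<Sum>b\<in>UNIV. \<bar>Q a b\<bar>)"
    by (rule member_le_sum) (auto intro: sum_nonneg)
  finally show ?thesis
    by (simp add: qm_def)
qed

definition \<kappa> :: real where
  "\<kappa> = 1 + (\<Sum>i<30. k i)"

text \<open>Half of the decay rate \<open>1 / (144 D)\<close> of the linear part is kept; below \<open>r0\<close> the other half
  absorbs the cubic remainder \<open>2 \<cdot> 21\<^sup>2 \<cdot> qm \<cdot> \<kappa> \<cdot> |v|\<^sup>3\<close>.\<close>

definition c0 :: real where
  "c0 = 1 / (288 * D)"

definition r0 :: real where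
  "r0 = c0 / (882 * qm * \<kappa>)"

lemma bounds_pos: "0 < qm" "0 < \<kappa>" "0 < c0" "0 < r0"
proof -
  show "0 < qm" "0 < \<kappa>"
    using k_nonneg by (auto simp: qm_def \<kappa>_def intro!: add_pos_nonneg sum_nonneg)
  then show "0 < c0" "0 < r0"
    using D_pos by (simp_all add: c0_def r0_def)
qed

lemma qform_deriv_fld_le:
  assumes "v \<in> cons_kernel" and "norm v < r0"
  shows "qform_deriv Q v (fld k (xs + v)) \<le> - c0 * (norm v)\<^sup>2"
proof -
  define S where "S = (\<Sum>a\<in>free_species. (v$a)\<^sup>2)"
  define Av where "Av a = (\<Sum>c\<in>UNIV. A a c * v$c)" for a
  have "Q a b * v$b * fld k (xs + v) $ a = Q a b * v$b * Av a / D + Q a b * v$b * fld_quad k v $ a"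
    for a b
    using fld_expansion[OF _ assms(1), of a] Q_eq_0[of a b]
    by (cases "a \<in> free_species") (simp_all add: Av_def ring_distribs)
  then have "qform_deriv Q v (fld k (xs + v))
      = 2 * (\<Sum>a\<in>UNIV. \<Sum>b\<in>UNIV. Q a b * v$b * Av a / D)
        + 2 * (\<Sum>a\<in>UNIV. \<Sum>b\<in>UNIV. Q a b * v$b * fld_quad k v $ a)"
    by (simp add: qform_deriv_symmetric[OF Q_symmetric] sum.distrib algebra_simps)
  also have "2 * (\<Sum>a\<in>UNIV. \<Sum>b\<in>UNIV. Q a b * v$b * Av a / D) = qform N v / D"
    unfolding Av_def bilinear_product_eq_qform[OF N_eq, symmetric]
    by (simp add: sum_divide_distrib[symmetric])
  also have "qform N v / D \<le> - S / D"
    unfolding S_def using D_pos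
    by (intro divide_right_mono qform_le_of_diag_dominance[OF N_diag_dominant]) simp
  also have "- S / D \<le> - (norm v)\<^sup>2 / (144 * D)"
    using norm_sq_le_free_species[OF assms(1)] D_pos by (simp add: S_def field_simps)
  also have "2 * (\<Sum>a\<in>UNIV. \<Sum>b\<in>UNIV. Q a b * v$b * fld_quad k v $ a)
      \<le> 2 * (real (CARD(species)\<^sup>2) * qm * norm v * (\<kappa> * (norm v)\<^sup>2))"
  proof -
    have "(\<Sum>i<30. k i) \<le> \<kappa>"
      by (simp add: \<kappa>_def)
    then have "\<bar>fld_quad k v $ a\<bar> \<le> \<kappa> * (norm v)\<^sup>2" for a
      using fld_quad_nth_abs_le[where v = v and a = a, OF k_nonneg]
      by (meson mult_right_mono order_trans zero_le_power2)
    then have "\<bar>\<Sum>a\<in>UNIV. \<Sum>b\<in>UNIV. Q a b * v$b * fld_quad k v $ a\<bar>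
        \<le> real (CARD(species)\<^sup>2) * qm * norm v * (\<kappa> * (norm v)\<^sup>2)"
      by (rule bilinear_abs_le[where Q = Q, OF abs_Q_le])
    then show ?thesis
      by simp
  qed
  also have "\<dots> \<le> 882 * qm * \<kappa> * r0 * (norm v)\<^sup>2"
    using assms(2) bounds_pos by (simp add: CARD_species mult_left_mono mult_right_mono)
  finally show ?thesis
    using D_pos bounds_pos by (simp add: r0_def c0_def field_simps)
qed

theorem asympt_stable: "asympt_stable k xs"
proof -
  interpret quadratic_lyapunov k xs "qform Q" "qform_deriv Q" cons_kernel "\<mu> / 144"
    "real (CARD(species)\<^sup>2) * qm" c0 r0
  proof
    show "\<mu> / 144 * (norm v)\<^sup>2 \<le> qform Q v" if "v \<in> cons_kernel" for v
    proof -
      have "\<mu> / 144 * (norm v)\<^sup>2 \<le> \<mu> * (\<Sum>a\<in>free_species. (v$a)\<^sup>2)"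
        using norm_sq_le_free_species[OF that] \<mu>_pos by simp
      also have "\<dots> \<le> qform Q v"
        unfolding qform_gram_plus_diag[OF Q_eq] by (simp add: sum_nonneg)
      finally show ?thesis .
    qed
  qed (use has_derivative_qform solution_minus_in_cons_kernel bounds_pos \<mu>_pos
      qform_le_norm[where Q = Q, OF abs_Q_le] qform_deriv_fld_le in auto)
  show ?thesis
    by (rule asympt_stable)
qed

end

section \<open>Two stable steady states in one compatibility class\<close>

definition rates :: "nat \<Rightarrow> real" where
  "rates i = [
     (1 / 40), (672123 / 1024000), (3 / 20), 15, (3075 / 2), 150, 20, (1402261 / 20480), 16,
     (15 / 2), 75, 150, (27 / 4), (389973 / 64000), (3 / 2), 32000, (33991 / 80), 1600,
     (51 / 2000), (22215349 / 102400000), (2 / 5), (3 / 20), (3 / 500), (3 / 2000), (1 / 400),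
     (15597 / 25600), (3 / 2), (3 / 25), (85191 / 128000), (3 / 5)] ! i"

lemma rates_nth:
  "rates 0 = (1 / 40)" "rates 1 = (672123 / 1024000)" "rates 2 = (3 / 20)" "rates 3 = 15"
  "rates 4 = (3075 / 2)" "rates 5 = 150" "rates 6 = 20" "rates 7 = (1402261 / 20480)"
  "rates 8 = 16" "rates 9 = (15 / 2)" "rates 10 = 75" "rates 11 = 150" "rates 12 = (27 / 4)"
  "rates 13 = (389973 / 64000)" "rates 14 = (3 / 2)" "rates 15 = 32000"
  "rates 16 = (33991 / 80)" "rates 17 = 1600" "rates 18 = (51 / 2000)"
  "rates 19 = (22215349 / 102400000)" "rates 20 = (2 / 5)" "rates 21 = (3 / 20)"
  "rates 22 = (3 / 500)" "rates 23 = (3 / 2000)" "rates 24 = (1 / 400)"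
  "rates 25 = (15597 / 25600)" "rates 26 = (3 / 2)" "rates 27 = (3 / 25)"
  "rates 28 = (85191 / 128000)" "rates 29 = (3 / 5)"
  "rates (Suc 0) = (672123 / 1024000)" \<comment> \<open>the form in which simp presents index 1\<close>
  by (simp_all add: rates_def)

lemma rates_pos: "i < 30 \<Longrightarrow> 0 < rates i"
  unfolding less_30_iff upt_30 by (auto simp: rates_nth)

lemma rates_nonneg: "i < 30 \<Longrightarrow> 0 \<le> rates i"
  using rates_pos[of i] by simp

definition jac_scale :: real where
  "jac_scale = 102400000"

definition xs1 :: "real^species" where
  "xs1 = (\<chi> s. case s of
     RAF \<Rightarrow> (275241 / 25600) | pRAF \<Rightarrow> 15 |
     MEK \<Rightarrow> (576647 / 5120) | pMEK \<Rightarrow> (3 / 100) |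
     ppMEK \<Rightarrow> (1 / 5) | ERK \<Rightarrow> (3716197 / 10240) |
     pERK \<Rightarrow> (5 / 2) | ppERK \<Rightarrow> 1 | RAS \<Rightarrow> 150 |
     RAFPH \<Rightarrow> (3 / 8) | PH \<Rightarrow> (53997 / 6400) | RAS_RAF \<Rightarrow> 50 |
     MEK_pRAF \<Rightarrow> 400 | pMEK_pRAF \<Rightarrow> (3 / 200) | ERK_ppMEK \<Rightarrow> 3 |
     pERK_ppMEK \<Rightarrow> 10 | RAF_RAFPH \<Rightarrow> (1 / 20) |
     ppMEK_PH \<Rightarrow> (3 / 2) | pMEK_PH \<Rightarrow> 4 | ppERK_PH \<Rightarrow> (1 / 100) |
     pERK_PH \<Rightarrow> 2)"

definition A1 :: "species \<Rightarrow> species \<Rightarrow> real" where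
  "A1 a b = (case a of
      pRAF \<Rightarrow> (case b of
        pRAF \<Rightarrow> (- 231257840000) | pMEK \<Rightarrow> 19200000000 |
        ppMEK \<Rightarrow> 30720000000 | RAS_RAF \<Rightarrow> 15360000 |
        MEK_pRAF \<Rightarrow> 39369705000 | pMEK_pRAF \<Rightarrow> 53760000000 |
        ERK_ppMEK \<Rightarrow> 30720000000 | pERK_ppMEK \<Rightarrow> 30720000000 |
        RAF_RAFPH \<Rightarrow> 180480000000 | ppMEK_PH \<Rightarrow> 30720000000 |
        pMEK_PH \<Rightarrow> 30720000000 | _ \<Rightarrow> 0) |
      pMEK \<Rightarrow> (case b of
        pRAF \<Rightarrow> (- 23040000) | pMEK \<Rightarrow> (- 27657984000000) |
        MEK_pRAF \<Rightarrow> 1638400000 | pMEK_pRAF \<Rightarrow> 7680000000 |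
        ppMEK_PH \<Rightarrow> 98457600000 | pMEK_PH \<Rightarrow> 141812480000 |
        ppERK_PH \<Rightarrow> 98304000000 | pERK_PH \<Rightarrow> 98304000000 | _ \<Rightarrow> 0) |
      ppMEK \<Rightarrow> (case b of
        ppMEK \<Rightarrow> (- 6817706235) | pERK \<Rightarrow> (- 2549760) |
        ppERK \<Rightarrow> 522240 | pMEK_pRAF \<Rightarrow> 15360000000 |
        ERK_ppMEK \<Rightarrow> 63697589 | pERK_ppMEK \<Rightarrow> 1290240 |
        ppMEK_PH \<Rightarrow> 762196800 | pMEK_PH \<Rightarrow> 138240000 |
        ppERK_PH \<Rightarrow> 138762240 | pERK_PH \<Rightarrow> 138762240 | _ \<Rightarrow> 0) |
      pERK \<Rightarrow> (case b of
        ppMEK \<Rightarrow> (- 38400000) | pERK \<Rightarrow> (- 106746240) |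
        ERK_ppMEK \<Rightarrow> 40960000 | pERK_ppMEK \<Rightarrow> 614400 |
        ppMEK_PH \<Rightarrow> 30720000 | pMEK_PH \<Rightarrow> 30720000 |
        ppERK_PH \<Rightarrow> 184320000 | pERK_PH \<Rightarrow> 98872800 | _ \<Rightarrow> 0) |
      ppERK \<Rightarrow> (case b of
        ppERK \<Rightarrow> (- 2159880) | pERK_ppMEK \<Rightarrow> 153600 |
        ppMEK_PH \<Rightarrow> 256000 | pMEK_PH \<Rightarrow> 256000 |
        ppERK_PH \<Rightarrow> 62644000 | pERK_PH \<Rightarrow> 256000 | _ \<Rightarrow> 0) |
      RAS_RAF \<Rightarrow> (case b of
        pRAF \<Rightarrow> (- 384000000) | RAS_RAF \<Rightarrow> (- 494096400) |
        MEK_pRAF \<Rightarrow> (- 384000000) | pMEK_pRAF \<Rightarrow> (- 384000000) |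
        RAF_RAFPH \<Rightarrow> (- 384000000) | _ \<Rightarrow> 0) |
      MEK_pRAF \<Rightarrow> (case b of
        pRAF \<Rightarrow> 230658800000 | pMEK \<Rightarrow> (- 30720000000) |
        ppMEK \<Rightarrow> (- 30720000000) | MEK_pRAF \<Rightarrow> (- 39369705000) |
        pMEK_pRAF \<Rightarrow> (- 30720000000) | ERK_ppMEK \<Rightarrow> (- 30720000000) |
        pERK_ppMEK \<Rightarrow> (- 30720000000) | ppMEK_PH \<Rightarrow> (- 30720000000) |
        pMEK_PH \<Rightarrow> (- 30720000000) | _ \<Rightarrow> 0) |
      pMEK_pRAF \<Rightarrow> (case b of
        pRAF \<Rightarrow> 23040000 | pMEK \<Rightarrow> 11520000000 |
        pMEK_pRAF \<Rightarrow> (- 23040000000) | _ \<Rightarrow> 0) |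
      ERK_ppMEK \<Rightarrow> (case b of
        ppMEK \<Rightarrow> 947630235 | pERK \<Rightarrow> (- 522240) |
        ppERK \<Rightarrow> (- 522240) | ERK_ppMEK \<Rightarrow> (- 63697589) |
        pERK_ppMEK \<Rightarrow> (- 522240) | ppERK_PH \<Rightarrow> (- 522240) |
        pERK_PH \<Rightarrow> (- 522240) | _ \<Rightarrow> 0) |
      pERK_ppMEK \<Rightarrow> (case b of
        ppMEK \<Rightarrow> 38400000 | pERK \<Rightarrow> 3072000 |
        pERK_ppMEK \<Rightarrow> (- 768000) | _ \<Rightarrow> 0) |
      RAF_RAFPH \<Rightarrow> (case b of
        pRAF \<Rightarrow> 576000000 | RAF_RAFPH \<Rightarrow> (- 195840000000) | _ \<Rightarrow> 0) |
      ppMEK_PH \<Rightarrow> (case b of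
        ppMEK \<Rightarrow> 5831676000 | ppMEK_PH \<Rightarrow> (- 915796800) |
        pMEK_PH \<Rightarrow> (- 138240000) | ppERK_PH \<Rightarrow> (- 138240000) |
        pERK_PH \<Rightarrow> (- 138240000) | _ \<Rightarrow> 0) |
      pMEK_PH \<Rightarrow> (case b of
        pMEK \<Rightarrow> 27646464000000 | ppMEK_PH \<Rightarrow> (- 98304000000) |
        pMEK_PH \<Rightarrow> (- 305652480000) | ppERK_PH \<Rightarrow> (- 98304000000) |
        pERK_PH \<Rightarrow> (- 98304000000) | _ \<Rightarrow> 0) |
      ppERK_PH \<Rightarrow> (case b of
        ppERK \<Rightarrow> 2159880 | ppMEK_PH \<Rightarrow> (- 256000) |
        pMEK_PH \<Rightarrow> (- 256000) | ppERK_PH \<Rightarrow> (- 216244000) |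
        pERK_PH \<Rightarrow> (- 256000) | _ \<Rightarrow> 0) |
      pERK_PH \<Rightarrow> (case b of
        pERK \<Rightarrow> 103674240 | ppMEK_PH \<Rightarrow> (- 30720000) |
        pMEK_PH \<Rightarrow> (- 30720000) | ppERK_PH \<Rightarrow> (- 30720000) |
        pERK_PH \<Rightarrow> (- 160312800) | _ \<Rightarrow> 0) |
      _ \<Rightarrow> 0)"

definition R1 :: "species \<Rightarrow> species \<Rightarrow> real" where
  "R1 a b = (case a of
      pRAF \<Rightarrow> (case b of
        pRAF \<Rightarrow> 16530657 | pMEK \<Rightarrow> 197 | ppMEK \<Rightarrow> 1097140 |
        pERK \<Rightarrow> 2535327 | ppERK \<Rightarrow> 3277413 | RAS_RAF \<Rightarrow> 158090 |
        MEK_pRAF \<Rightarrow> 16533132 | pMEK_pRAF \<Rightarrow> 17248524 |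
        ERK_ppMEK \<Rightarrow> 2188719 | pERK_ppMEK \<Rightarrow> 10987201 |
        RAF_RAFPH \<Rightarrow> 15232940 | ppMEK_PH \<Rightarrow> 882505 |
        pMEK_PH \<Rightarrow> (- 99) | ppERK_PH \<Rightarrow> 3201283 |
        pERK_PH \<Rightarrow> 2087043 | _ \<Rightarrow> 0) |
      pMEK \<Rightarrow> (case b of
        pMEK \<Rightarrow> 150712 | ppMEK \<Rightarrow> 1698693 | pERK \<Rightarrow> 1631822 |
        ppERK \<Rightarrow> 1403083 | RAS_RAF \<Rightarrow> 2205 |
        MEK_pRAF \<Rightarrow> (- 12407) | pMEK_pRAF \<Rightarrow> 1153554 |
        ERK_ppMEK \<Rightarrow> 2860997 | pERK_ppMEK \<Rightarrow> 7473104 |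
        RAF_RAFPH \<Rightarrow> 6188 | ppMEK_PH \<Rightarrow> 1474372 |
        pMEK_PH \<Rightarrow> 150271 | ppERK_PH \<Rightarrow> 1931545 |
        pERK_PH \<Rightarrow> 1446742 | _ \<Rightarrow> 0) |
      ppMEK \<Rightarrow> (case b of
        ppMEK \<Rightarrow> 19734934 | pERK \<Rightarrow> 18433422 | ppERK \<Rightarrow> 15974180 |
        RAS_RAF \<Rightarrow> 21233 | MEK_pRAF \<Rightarrow> (- 127) |
        pMEK_pRAF \<Rightarrow> 13155358 | ERK_ppMEK \<Rightarrow> 32946181 |
        pERK_ppMEK \<Rightarrow> 85767239 | RAF_RAFPH \<Rightarrow> (- 584) |
        ppMEK_PH \<Rightarrow> 17237266 | pMEK_PH \<Rightarrow> (- 5481) |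
        ppERK_PH \<Rightarrow> 22026087 | pERK_PH \<Rightarrow> 16776203 | _ \<Rightarrow> 0) |
      pERK \<Rightarrow> (case b of
        pERK \<Rightarrow> 9159040 | ppERK \<Rightarrow> 2497363 | RAS_RAF \<Rightarrow> 52618 |
        MEK_pRAF \<Rightarrow> 419 | pMEK_pRAF \<Rightarrow> 6949 |
        ERK_ppMEK \<Rightarrow> 1812525 | pERK_ppMEK \<Rightarrow> 12756576 |
        RAF_RAFPH \<Rightarrow> (- 78) | ppMEK_PH \<Rightarrow> (- 238922) |
        pMEK_PH \<Rightarrow> (- 2) | ppERK_PH \<Rightarrow> 6614538 |
        pERK_PH \<Rightarrow> 5894491 | _ \<Rightarrow> 0) |
      ppERK \<Rightarrow> (case b of
        ppERK \<Rightarrow> 49732061 | RAS_RAF \<Rightarrow> 13906 | MEK_pRAF \<Rightarrow> 48 |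
        pMEK_pRAF \<Rightarrow> 1485 | ERK_ppMEK \<Rightarrow> (- 55604) |
        pERK_ppMEK \<Rightarrow> 4927014 | RAF_RAFPH \<Rightarrow> 28 |
        ppMEK_PH \<Rightarrow> (- 17122) | pMEK_PH \<Rightarrow> (- 1) |
        ppERK_PH \<Rightarrow> 14374661 | pERK_PH \<Rightarrow> 94893 | _ \<Rightarrow> 0) |
      RAS_RAF \<Rightarrow> (case b of
        RAS_RAF \<Rightarrow> 2738619 | MEK_pRAF \<Rightarrow> 9 | pMEK_pRAF \<Rightarrow> 498 |
        ERK_ppMEK \<Rightarrow> (- 3945) | pERK_ppMEK \<Rightarrow> 474750 |
        RAF_RAFPH \<Rightarrow> (- 327) | ppMEK_PH \<Rightarrow> (- 2598) |
        ppERK_PH \<Rightarrow> 35141 | pERK_PH \<Rightarrow> 17907 | _ \<Rightarrow> 0) |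
      MEK_pRAF \<Rightarrow> (case b of
        MEK_pRAF \<Rightarrow> 163776 | pMEK_pRAF \<Rightarrow> 16692 |
        ERK_ppMEK \<Rightarrow> 10538 | pERK_ppMEK \<Rightarrow> 45149 |
        RAF_RAFPH \<Rightarrow> 12496 | ppMEK_PH \<Rightarrow> (- 2671) |
        pMEK_PH \<Rightarrow> 57 | ppERK_PH \<Rightarrow> 5606 | pERK_PH \<Rightarrow> 2776 |
        _ \<Rightarrow> 0) |
      pMEK_pRAF \<Rightarrow> (case b of
        pMEK_pRAF \<Rightarrow> 595876 | ERK_ppMEK \<Rightarrow> 171372 |
        pERK_ppMEK \<Rightarrow> 505091 | RAF_RAFPH \<Rightarrow> 42815 |
        ppMEK_PH \<Rightarrow> 35458 | pMEK_PH \<Rightarrow> (- 278) |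
        ppERK_PH \<Rightarrow> 53889 | pERK_PH \<Rightarrow> 59336 | _ \<Rightarrow> 0) |
      ERK_ppMEK \<Rightarrow> (case b of
        ERK_ppMEK \<Rightarrow> 6047678 | pERK_ppMEK \<Rightarrow> (- 6004360) |
        RAF_RAFPH \<Rightarrow> (- 1481) | ppMEK_PH \<Rightarrow> (- 763119) |
        pMEK_PH \<Rightarrow> 1 | ppERK_PH \<Rightarrow> 690675 | pERK_PH \<Rightarrow> 1000273 |
        _ \<Rightarrow> 0) |
      pERK_ppMEK \<Rightarrow> (case b of
        pERK_ppMEK \<Rightarrow> 47369549 | RAF_RAFPH \<Rightarrow> (- 651) |
        ppMEK_PH \<Rightarrow> (- 251494) | pMEK_PH \<Rightarrow> 1 |
        ppERK_PH \<Rightarrow> 400165 | pERK_PH \<Rightarrow> 256014 | _ \<Rightarrow> 0) |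
      RAF_RAFPH \<Rightarrow> (case b of
        RAF_RAFPH \<Rightarrow> 173524 | ppMEK_PH \<Rightarrow> (- 14184) |
        pMEK_PH \<Rightarrow> (- 27) | ppERK_PH \<Rightarrow> (- 8085) |
        pERK_PH \<Rightarrow> (- 6808) | _ \<Rightarrow> 0) |
      ppMEK_PH \<Rightarrow> (case b of
        ppMEK_PH \<Rightarrow> 1056630 | ppERK_PH \<Rightarrow> (- 22706) |
        pERK_PH \<Rightarrow> (- 132214) | _ \<Rightarrow> 0) |
      pMEK_PH \<Rightarrow> (case b of
        pMEK_PH \<Rightarrow> 830 | ppERK_PH \<Rightarrow> 876 | pERK_PH \<Rightarrow> 198 |
        _ \<Rightarrow> 0) |
      ppERK_PH \<Rightarrow> (case b of
        ppERK_PH \<Rightarrow> 4931207 | pERK_PH \<Rightarrow> 348912 | _ \<Rightarrow> 0) |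
      pERK_PH \<Rightarrow> (case b of
        pERK_PH \<Rightarrow> 4782375 | _ \<Rightarrow> 0) |
      _ \<Rightarrow> 0)"

definition \<mu>1 :: real where
  "\<mu>1 = 131637127"

definition Q1 :: "species \<Rightarrow> species \<Rightarrow> real" where
  "Q1 a b = (case a of
      pRAF \<Rightarrow> (case b of
        pRAF \<Rightarrow> 273262752488776 | pMEK \<Rightarrow> 3256539429 |
        ppMEK \<Rightarrow> 18136445020980 | pERK \<Rightarrow> 41910621019839 |
        ppERK \<Rightarrow> 54177790150341 | RAS_RAF \<Rightarrow> 2613331565130 |
        MEK_pRAF \<Rightarrow> 273303534227724 | pMEK_pRAF \<Rightarrow> 285129434000268 |
        ERK_ppMEK \<Rightarrow> 36180963058383 | pERK_ppMEK \<Rightarrow> 181625651121057 |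
        RAF_RAFPH \<Rightarrow> 251810506241580 | ppMEK_PH \<Rightarrow> 14588387455785 |
        pMEK_PH \<Rightarrow> (- 1636535043) | ppERK_PH \<Rightarrow> 52919311232931 |
        pERK_PH \<Rightarrow> 34500191977251 | _ \<Rightarrow> 0) |
      pMEK \<Rightarrow> (case b of
        pRAF \<Rightarrow> 3256539429 | pMEK \<Rightarrow> 22845782880 |
        ppMEK \<Rightarrow> 256229555996 | pERK \<Rightarrow> 246434616683 |
        ppERK \<Rightarrow> 212107095457 | RAS_RAF \<Rightarrow> 363463690 |
        MEK_pRAF \<Rightarrow> 1387143220 | pMEK_pRAF \<Rightarrow> 177252389676 |
        ERK_ppMEK \<Rightarrow> 431617757507 | pERK_ppMEK \<Rightarrow> 1128450928645 |
        RAF_RAFPH \<Rightarrow> 3933495036 | ppMEK_PH \<Rightarrow> 222379406349 |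
        pMEK_PH \<Rightarrow> 22647623449 | ppERK_PH \<Rightarrow> 291737662791 |
        pERK_PH \<Rightarrow> 218452527775 | _ \<Rightarrow> 0) |
      ppMEK \<Rightarrow> (case b of
        pRAF \<Rightarrow> 18136445020980 | pMEK \<Rightarrow> 256229555996 |
        ppMEK \<Rightarrow> 393557025709332 | pERK \<Rightarrow> 369335939837574 |
        ppERK \<Rightarrow> 321228576173459 | RAS_RAF \<Rightarrow> 596224334287 |
        MEK_pRAF \<Rightarrow> 18115578421811 | pMEK_pRAF \<Rightarrow> 280503701602654 |
        ERK_ppMEK \<Rightarrow> 657451994327635 | pERK_ppMEK \<Rightarrow> 1717359808185438 |
        RAF_RAFPH \<Rightarrow> 16711654102428 | ppMEK_PH \<Rightarrow> 343649043781940 |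
        pMEK_PH \<Rightarrow> 146988505689 | ppERK_PH \<Rightarrow> 441476730824563 |
        pERK_PH \<Rightarrow> 335824607840828 | _ \<Rightarrow> 0) |
      pERK \<Rightarrow> (case b of
        pRAF \<Rightarrow> 41910621019839 | pMEK \<Rightarrow> 246434616683 |
        ppMEK \<Rightarrow> 369335939837574 | pERK \<Rightarrow> 432769918025424 |
        ppERK \<Rightarrow> 327931144031757 | RAS_RAF \<Rightarrow> 1277735228986 |
        MEK_pRAF \<Rightarrow> 41898146531776 | pMEK_pRAF \<Rightarrow> 288174955146772 |
        ERK_ppMEK \<Rightarrow> 634129602860029 | pERK_ppMEK \<Rightarrow> 1737872622974113 |
        RAF_RAFPH \<Rightarrow> 38619102262348 | ppMEK_PH \<Rightarrow> 320196853569291 |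
        pMEK_PH \<Rightarrow> 143912622327 | ppERK_PH \<Rightarrow> 477867211652765 |
        pERK_PH \<Rightarrow> 370882870197291 | _ \<Rightarrow> 0) |
      ppERK \<Rightarrow> (case b of
        pRAF \<Rightarrow> 54177790150341 | pMEK \<Rightarrow> 212107095457 |
        ppMEK \<Rightarrow> 321228576173459 | pERK \<Rightarrow> 327931144031757 |
        ppERK \<Rightarrow> 2747399349448475 | RAS_RAF \<Rightarrow> 1683380069725 |
        MEK_pRAF \<Rightarrow> 54169898509900 | pMEK_pRAF \<Rightarrow> 268386331737906 |
        ERK_ppMEK \<Rightarrow> 539237009316009 | pERK_ppMEK \<Rightarrow> 1693444656164607 |
        RAF_RAFPH \<Rightarrow> 49925186644098 | ppMEK_PH \<Rightarrow> 278864002129193 |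
        pMEK_PH \<Rightarrow> 122909014239 | ppERK_PH \<Rightarrow> 1096451143077389 |
        pERK_PH \<Rightarrow> 296295995595591 | _ \<Rightarrow> 0) |
      RAS_RAF \<Rightarrow> (case b of
        pRAF \<Rightarrow> 2613331565130 | pMEK \<Rightarrow> 363463690 |
        ppMEK \<Rightarrow> 596224334287 | pERK \<Rightarrow> 1277735228986 |
        ppERK \<Rightarrow> 1683380069725 | RAS_RAF \<Rightarrow> 7528575845462 |
        MEK_pRAF \<Rightarrow> 2613740145855 | pMEK_pRAF \<Rightarrow> 3010440587298 |
        ERK_ppMEK \<Rightarrow> 1135663705539 | pERK_ppMEK \<Rightarrow> 5614440528999 |
        RAF_RAFPH \<Rightarrow> 2407277485819 | ppMEK_PH \<Rightarrow> 488840446198 |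
        pMEK_PH \<Rightarrow> 199199430 | ppERK_PH \<Rightarrow> 1622205398095 |
        pERK_PH \<Rightarrow> 1049856172208 | _ \<Rightarrow> 0) |
      MEK_pRAF \<Rightarrow> (case b of
        pRAF \<Rightarrow> 273303534227724 | pMEK \<Rightarrow> 1387143220 |
        ppMEK \<Rightarrow> 18115578421811 | pERK \<Rightarrow> 41898146531776 |
        ppERK \<Rightarrow> 54169898509900 | RAS_RAF \<Rightarrow> 2613740145855 |
        MEK_pRAF \<Rightarrow> 273371562072451 | pMEK_pRAF \<Rightarrow> 285158877958609 |
        ERK_ppMEK \<Rightarrow> 36149182198108 | pERK_ppMEK \<Rightarrow> 181562213300241 |
        RAF_RAFPH \<Rightarrow> 251850177578347 | ppMEK_PH \<Rightarrow> 14569551590222 |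
        pMEK_PH \<Rightarrow> (- 3491161932) | ppERK_PH \<Rightarrow> 52904852336167 |
        pERK_PH \<Rightarrow> 34488206252833 | _ \<Rightarrow> 0) |
      pMEK_pRAF \<Rightarrow> (case b of
        pRAF \<Rightarrow> 285129434000268 | pMEK \<Rightarrow> 177252389676 |
        ppMEK \<Rightarrow> 280503701602654 | pERK \<Rightarrow> 288174955146772 |
        ppERK \<Rightarrow> 268386331737906 | RAS_RAF \<Rightarrow> 3010440587298 |
        MEK_pRAF \<Rightarrow> 285158877958609 | pMEK_pRAF \<Rightarrow> 472261240326853 |
        ERK_ppMEK \<Rightarrow> 474586095583735 | pERK_ppMEK \<Rightarrow> 1326830286589240 |
        RAF_RAFPH \<Rightarrow> 262770906994524 | ppMEK_PH \<Rightarrow> 243704478559860 |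
        pMEK_PH \<Rightarrow> 99368874593 | ppERK_PH \<Rightarrow> 347306140974849 |
        pERK_PH \<Rightarrow> 258440776528352 | _ \<Rightarrow> 0) |
      ERK_ppMEK \<Rightarrow> (case b of
        pRAF \<Rightarrow> 36180963058383 | pMEK \<Rightarrow> 431617757507 |
        ppMEK \<Rightarrow> 657451994327635 | pERK \<Rightarrow> 634129602860029 |
        ppERK \<Rightarrow> 539237009316009 | RAS_RAF \<Rightarrow> 1135663705539 |
        MEK_pRAF \<Rightarrow> 36149182198108 | pMEK_pRAF \<Rightarrow> 474586095583735 |
        ERK_ppMEK \<Rightarrow> 1138319011663836 | pERK_ppMEK \<Rightarrow> 2857751780372594 |
        RAF_RAFPH \<Rightarrow> 33337459203655 | ppMEK_PH \<Rightarrow> 569010675487569 |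
        pMEK_PH \<Rightarrow> 249085616427 | ppERK_PH \<Rightarrow> 753584164751936 |
        pERK_PH \<Rightarrow> 578156987745296 | _ \<Rightarrow> 0) |
      pERK_ppMEK \<Rightarrow> (case b of
        pRAF \<Rightarrow> 181625651121057 | pMEK \<Rightarrow> 1128450928645 |
        ppMEK \<Rightarrow> 1717359808185438 | pERK \<Rightarrow> 1737872622974113 |
        ppERK \<Rightarrow> 1693444656164607 | RAS_RAF \<Rightarrow> 5614440528999 |
        MEK_pRAF \<Rightarrow> 181562213300241 | pMEK_pRAF \<Rightarrow> 1326830286589240 |
        ERK_ppMEK \<Rightarrow> 2857751780372594 | pERK_ppMEK \<Rightarrow> 10000000039115420 |
        RAF_RAFPH \<Rightarrow> 167362761334960 | ppMEK_PH \<Rightarrow> 1488660360218820 |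
        pMEK_PH \<Rightarrow> 651685924544 | ppERK_PH \<Rightarrow> 2108780186479026 |
        pERK_PH \<Rightarrow> 1554411953428502 | _ \<Rightarrow> 0) |
      RAF_RAFPH \<Rightarrow> (case b of
        pRAF \<Rightarrow> 251810506241580 | pMEK \<Rightarrow> 3933495036 |
        ppMEK \<Rightarrow> 16711654102428 | pERK \<Rightarrow> 38619102262348 |
        ppERK \<Rightarrow> 49925186644098 | RAS_RAF \<Rightarrow> 2407277485819 |
        MEK_pRAF \<Rightarrow> 251850177578347 | pMEK_pRAF \<Rightarrow> 262770906994524 |
        ERK_ppMEK \<Rightarrow> 33337459203655 | pERK_ppMEK \<Rightarrow> 167362761334960 |
        RAF_RAFPH \<Rightarrow> 232074733896903 | ppMEK_PH \<Rightarrow> 13442538966209 |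
        pMEK_PH \<Rightarrow> (- 590860658) | ppERK_PH \<Rightarrow> 48763607064590 |
        pERK_PH \<Rightarrow> 31790238703398 | _ \<Rightarrow> 0) |
      ppMEK_PH \<Rightarrow> (case b of
        pRAF \<Rightarrow> 14588387455785 | pMEK \<Rightarrow> 222379406349 |
        ppMEK \<Rightarrow> 343649043781940 | pERK \<Rightarrow> 320196853569291 |
        ppERK \<Rightarrow> 278864002129193 | RAS_RAF \<Rightarrow> 488840446198 |
        MEK_pRAF \<Rightarrow> 14569551590222 | pMEK_pRAF \<Rightarrow> 243704478559860 |
        ERK_ppMEK \<Rightarrow> 569010675487569 | pERK_ppMEK \<Rightarrow> 1488660360218820 |
        RAF_RAFPH \<Rightarrow> 13442538966209 | ppMEK_PH \<Rightarrow> 301896974682822 |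
        pMEK_PH \<Rightarrow> 126980385621 | ppERK_PH \<Rightarrow> 382866224134362 |
        pERK_PH \<Rightarrow> 290775518991344 | _ \<Rightarrow> 0) |
      pMEK_PH \<Rightarrow> (case b of
        pRAF \<Rightarrow> (- 1636535043) | pMEK \<Rightarrow> 22647623449 |
        ppMEK \<Rightarrow> 146988505689 | pERK \<Rightarrow> 143912622327 |
        ppERK \<Rightarrow> 122909014239 | RAS_RAF \<Rightarrow> 199199430 |
        MEK_pRAF \<Rightarrow> (- 3491161932) | pMEK_pRAF \<Rightarrow> 99368874593 |
        ERK_ppMEK \<Rightarrow> 249085616427 | pERK_ppMEK \<Rightarrow> 651685924544 |
        RAF_RAFPH \<Rightarrow> (- 590860658) | ppMEK_PH \<Rightarrow> 126980385621 |
        pMEK_PH \<Rightarrow> 22743831899 | ppERK_PH \<Rightarrow> 169173059709 |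
        pERK_PH \<Rightarrow> 125219764574 | _ \<Rightarrow> 0) |
      ppERK_PH \<Rightarrow> (case b of
        pRAF \<Rightarrow> 52919311232931 | pMEK \<Rightarrow> 291737662791 |
        ppMEK \<Rightarrow> 441476730824563 | pERK \<Rightarrow> 477867211652765 |
        ppERK \<Rightarrow> 1096451143077389 | RAS_RAF \<Rightarrow> 1622205398095 |
        MEK_pRAF \<Rightarrow> 52904852336167 | pMEK_pRAF \<Rightarrow> 347306140974849 |
        ERK_ppMEK \<Rightarrow> 753584164751936 | pERK_ppMEK \<Rightarrow> 2108780186479026 |
        RAF_RAFPH \<Rightarrow> 48763607064590 | ppMEK_PH \<Rightarrow> 382866224134362 |
        pMEK_PH \<Rightarrow> 169173059709 | ppERK_PH \<Rightarrow> 774469429418349 |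
        pERK_PH \<Rightarrow> 421863927127079 | _ \<Rightarrow> 0) |
      pERK_PH \<Rightarrow> (case b of
        pRAF \<Rightarrow> 34500191977251 | pMEK \<Rightarrow> 218452527775 |
        ppMEK \<Rightarrow> 335824607840828 | pERK \<Rightarrow> 370882870197291 |
        ppERK \<Rightarrow> 296295995595591 | RAS_RAF \<Rightarrow> 1049856172208 |
        MEK_pRAF \<Rightarrow> 34488206252833 | pMEK_pRAF \<Rightarrow> 258440776528352 |
        ERK_ppMEK \<Rightarrow> 578156987745296 | pERK_ppMEK \<Rightarrow> 1554411953428502 |
        RAF_RAFPH \<Rightarrow> 31790238703398 | ppMEK_PH \<Rightarrow> 290775518991344 |
        pMEK_PH \<Rightarrow> 125219764574 | ppERK_PH \<Rightarrow> 421863927127079 |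
        pERK_PH \<Rightarrow> 346724273987958 | _ \<Rightarrow> 0) |
      _ \<Rightarrow> 0)"

definition N1 :: "species \<Rightarrow> species \<Rightarrow> real" where
  "N1 a b = (case a of
      pRAF \<Rightarrow> (case b of
        pRAF \<Rightarrow> (- 7360025760759084160000) | pMEK \<Rightarrow> 275266836432384000000 |
        ppMEK \<Rightarrow> (- 351577269443187880590) |
        pERK \<Rightarrow> (- 808409509595201479680) |
        ppERK \<Rightarrow> (- 24283465087977707040) |
        RAS_RAF \<Rightarrow> 5812156319781001656000 |
        MEK_pRAF \<Rightarrow> (- 5207497677158433480000) |
        pMEK_pRAF \<Rightarrow> 5872258757598720000000 |
        ERK_ppMEK \<Rightarrow> (- 1371096554319074962734) |
        pERK_ppMEK \<Rightarrow> (- 2707453411491182039040) |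
        RAF_RAFPH \<Rightarrow> 5777015004510720000000 |
        ppMEK_PH \<Rightarrow> (- 159587326281545808000) |
        pMEK_PH \<Rightarrow> 855335870530575360000 |
        ppERK_PH \<Rightarrow> (- 844763163264408685440) |
        pERK_PH \<Rightarrow> (- 849222108458516432640) | _ \<Rightarrow> 0) |
      pMEK \<Rightarrow> (case b of
        pRAF \<Rightarrow> (- 854919664735363040000) |
        pMEK \<Rightarrow> (- 7359461895587328000000) | ppMEK \<Rightarrow> 100516240581704626170 |
        pERK \<Rightarrow> (- 2140399242357765120) | ppERK \<Rightarrow> 160795470832510560 |
        RAS_RAF \<Rightarrow> (- 259131310260552000) |
        MEK_pRAF \<Rightarrow> 221777075780160690000 |
        pMEK_pRAF \<Rightarrow> 319130968819200000000 |
        ERK_ppMEK \<Rightarrow> 112700015729037646042 |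
        pERK_ppMEK \<Rightarrow> 113700759740561387520 |
        RAF_RAFPH \<Rightarrow> (- 365470003522560000000) |
        ppMEK_PH \<Rightarrow> 145798103534292771200 |
        pMEK_PH \<Rightarrow> (- 7239077249929927168000) |
        ppERK_PH \<Rightarrow> 25960798573724078720 | pERK_PH \<Rightarrow> 26784546812635147520 |
        _ \<Rightarrow> 0) |
      ppMEK \<Rightarrow> (case b of
        pRAF \<Rightarrow> 352687249633847840000 | pMEK \<Rightarrow> 62577255235584000000 |
        ppMEK \<Rightarrow> (- 7359561207068526001590) |
        pERK \<Rightarrow> (- 1359912487951952555520) | ppERK \<Rightarrow> 243810151713207897600 |
        RAS_RAF \<Rightarrow> (- 32033003282700933600) |
        MEK_pRAF \<Rightarrow> 2024736427628827090000 |
        pMEK_pRAF \<Rightarrow> 4948476051450624000000 |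
        ERK_ppMEK \<Rightarrow> (- 2080902455995702662934) |
        pERK_ppMEK \<Rightarrow> (- 474428816289486397440) |
        RAF_RAFPH \<Rightarrow> 452615645209344000000 |
        ppMEK_PH \<Rightarrow> (- 4653786836777242316800) |
        pMEK_PH \<Rightarrow> (- 103733141563248128000) |
        ppERK_PH \<Rightarrow> (- 167775308028913469440) |
        pERK_PH \<Rightarrow> 299613831054976972160 | _ \<Rightarrow> 0) |
      pERK \<Rightarrow> (case b of
        pRAF \<Rightarrow> 808673650489631200000 | pMEK \<Rightarrow> 277584920036352000000 |
        ppMEK \<Rightarrow> 1359822234732971237850 |
        pERK \<Rightarrow> (- 7359405979161682026240) | ppERK \<Rightarrow> 371116142312831719680 |
        RAS_RAF \<Rightarrow> 24845524139137579200 | MEK_pRAF \<Rightarrow> 808450126218269230000 |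
        pMEK_pRAF \<Rightarrow> 1709922844180992000000 |
        ERK_ppMEK \<Rightarrow> 2485508397215781358010 |
        pERK_ppMEK \<Rightarrow> (- 979683361144500940800) |
        RAF_RAFPH \<Rightarrow> 746488548759552000000 |
        ppMEK_PH \<Rightarrow> 1267189679851014012800 |
        pMEK_PH \<Rightarrow> (- 1511465786494976000) |
        ppERK_PH \<Rightarrow> 4629308728786124057600 |
        pERK_PH \<Rightarrow> 53084201183420830400 | _ \<Rightarrow> 0) |
      ppERK \<Rightarrow> (case b of
        pRAF \<Rightarrow> 28567940350539040000 | pMEK \<Rightarrow> (- 1060369438162944000000) |
        ppMEK \<Rightarrow> (- 244228476248780833500) |
        pERK \<Rightarrow> (- 371118744527629447680) |
        ppERK \<Rightarrow> (- 7359405472202293083360) | RAS_RAF \<Rightarrow> 837648852732540000 |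
        MEK_pRAF \<Rightarrow> 23579749101177410000 |
        pMEK_pRAF \<Rightarrow> (- 137744824968960000000) |
        ERK_ppMEK \<Rightarrow> (- 424241437919683183900) |
        pERK_ppMEK \<Rightarrow> (- 603604088483299430400) |
        RAF_RAFPH \<Rightarrow> 25192013233920000000 |
        ppMEK_PH \<Rightarrow> (- 210708872174873030400) |
        pMEK_PH \<Rightarrow> 10745253730220032000 |
        ppERK_PH \<Rightarrow> 1720627028538988464000 |
        pERK_PH \<Rightarrow> (- 285546712907041622400) | _ \<Rightarrow> 0) |
      RAS_RAF \<Rightarrow> (case b of
        pRAF \<Rightarrow> (- 5812553033883161760000) | pMEK \<Rightarrow> 33262566435840000000 |
        ppMEK \<Rightarrow> 32087768808712480440 | pERK \<Rightarrow> (- 24832294627816742400) |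
        ppERK \<Rightarrow> (- 827693534005697760) |
        RAS_RAF \<Rightarrow> (- 7359402899058667473600) |
        MEK_pRAF \<Rightarrow> (- 5812926656719296250000) |
        pMEK_pRAF \<Rightarrow> (- 5784238838985216000000) |
        ERK_ppMEK \<Rightarrow> 10846895493676497144 |
        pERK_ppMEK \<Rightarrow> (- 31287398046765404160) |
        RAF_RAFPH \<Rightarrow> (- 5356230145575936000000) |
        ppMEK_PH \<Rightarrow> 34859861285925110400 | pMEK_PH \<Rightarrow> (- 65716735308800000) |
        ppERK_PH \<Rightarrow> (- 22734163068223608960) |
        pERK_PH \<Rightarrow> (- 22491192824603372160) | _ \<Rightarrow> 0) |
      MEK_pRAF \<Rightarrow> (case b of
        pRAF \<Rightarrow> 5207053090092954400000 | pMEK \<Rightarrow> (- 800246531790336000000) |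
        ppMEK \<Rightarrow> (- 2024889644412652048410) |
        pERK \<Rightarrow> (- 808481679800031571200) |
        ppERK \<Rightarrow> (- 24300434331711554640) |
        RAS_RAF \<Rightarrow> 5813005378270820436000 |
        MEK_pRAF \<Rightarrow> (- 7359279398488935070000) |
        pMEK_pRAF \<Rightarrow> 4050653306668800000000 |
        ERK_ppMEK \<Rightarrow> (- 3044728779206618575866) |
        pERK_ppMEK \<Rightarrow> (- 4381395114391927541760) |
        RAF_RAFPH \<Rightarrow> 4958808520285440000000 |
        ppMEK_PH \<Rightarrow> (- 1834402036939719753600) |
        pMEK_PH \<Rightarrow> (- 215717801768390144000) |
        ppERK_PH \<Rightarrow> (- 846814608106121146560) |
        pERK_PH \<Rightarrow> (- 851296415033540813760) | _ \<Rightarrow> 0) |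
      pMEK_pRAF \<Rightarrow> (case b of
        pRAF \<Rightarrow> (- 5871159439879083680000) |
        pMEK \<Rightarrow> (- 783705965320704000000) |
        ppMEK \<Rightarrow> (- 4948594068082063119930) |
        pERK \<Rightarrow> (- 1709968305707429268480) | ppERK \<Rightarrow> 138199456284017410800 |
        RAS_RAF \<Rightarrow> 5784280499292577905600 |
        MEK_pRAF \<Rightarrow> (- 4049597648389466010000) |
        pMEK_pRAF \<Rightarrow> (- 7358380761598464000000) |
        ERK_ppMEK \<Rightarrow> (- 2926905602733420387418) |
        pERK_ppMEK \<Rightarrow> (- 3182351947881557422080) |
        RAF_RAFPH \<Rightarrow> (- 4100373249467904000000) |
        ppMEK_PH \<Rightarrow> (- 3425117463118991097600) |
        pMEK_PH \<Rightarrow> (- 319810598171913216000) |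
        ppERK_PH \<Rightarrow> (- 941881270302854546880) |
        pERK_PH \<Rightarrow> (- 633750429281784986880) | _ \<Rightarrow> 0) |
      ERK_ppMEK \<Rightarrow> (case b of
        pRAF \<Rightarrow> 1372843206003349600000 | pMEK \<Rightarrow> 125861884162560000000 |
        ppMEK \<Rightarrow> 2080502432083618042470 |
        pERK \<Rightarrow> (- 2485543042444018456320) | ppERK \<Rightarrow> 423672285898584797040 |
        RAS_RAF \<Rightarrow> (- 10775511881434159200) |
        MEK_pRAF \<Rightarrow> 3044541529290923350000 |
        pMEK_pRAF \<Rightarrow> 2926834061476608000000 |
        ERK_ppMEK \<Rightarrow> (- 7359626146284836558778) |
        pERK_ppMEK \<Rightarrow> (- 984428333080090644480) |
        RAF_RAFPH \<Rightarrow> 1392214940483328000000 |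
        ppMEK_PH \<Rightarrow> 1321000858499628473600 |
        pMEK_PH \<Rightarrow> (- 115619961006554624000) |
        ppERK_PH \<Rightarrow> (- 275331306710284396480) |
        pERK_PH \<Rightarrow> (- 248058994202448719680) | _ \<Rightarrow> 0) |
      pERK_ppMEK \<Rightarrow> (case b of
        pRAF \<Rightarrow> 2711307975659773440000 | pMEK \<Rightarrow> 1679866825592832000000 |
        ppMEK \<Rightarrow> 473433353252004187320 | pERK \<Rightarrow> 979644606106086915840 |
        ppERK \<Rightarrow> 603033203320973920560 | RAS_RAF \<Rightarrow> 31390295653868032800 |
        MEK_pRAF \<Rightarrow> 4380874259450262560000 |
        pMEK_pRAF \<Rightarrow> 3182440731433728000000 |
        ERK_ppMEK \<Rightarrow> 983706698420589026232 |
        pERK_ppMEK \<Rightarrow> (- 7359908213399095726080) |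
        RAF_RAFPH \<Rightarrow> 2636778653330688000000 |
        ppMEK_PH \<Rightarrow> 350777652489538156800 |
        pMEK_PH \<Rightarrow> (- 134373706925017088000) |
        ppERK_PH \<Rightarrow> 1067982799130050509120 |
        pERK_PH \<Rightarrow> 835268239873178214720 | _ \<Rightarrow> 0) |
      RAF_RAFPH \<Rightarrow> (case b of
        pRAF \<Rightarrow> (- 5778438972788296160000) |
        pMEK \<Rightarrow> (- 165274943496192000000) |
        ppMEK \<Rightarrow> (- 451958321224613291310) |
        pERK \<Rightarrow> (- 744995161450991976960) |
        ppERK \<Rightarrow> (- 22383065916505055040) |
        RAS_RAF \<Rightarrow> 5356764472652899696800 |
        MEK_pRAF \<Rightarrow> (- 4959597483519914670000) |
        pMEK_pRAF \<Rightarrow> 4100969774608128000000 |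
        ERK_ppMEK \<Rightarrow> (- 1391777473897053523406) |
        pERK_ppMEK \<Rightarrow> (- 2623380182388738600960) |
        RAF_RAFPH \<Rightarrow> (- 7360228887359232000000) |
        ppMEK_PH \<Rightarrow> (- 272643710300905705600) |
        pMEK_PH \<Rightarrow> 363431550853907456000 |
        ppERK_PH \<Rightarrow> (- 775290359593804552960) |
        pERK_PH \<Rightarrow> (- 779407925110483480960) | _ \<Rightarrow> 0) |
      ppMEK_PH \<Rightarrow> (case b of
        pRAF \<Rightarrow> 162659016913789280000 | pMEK \<Rightarrow> (- 22791288013824000000) |
        ppMEK \<Rightarrow> 4652939723462751849630 |
        pERK \<Rightarrow> (- 1268194661534180532480) | ppERK \<Rightarrow> 213878921445153461520 |
        RAS_RAF \<Rightarrow> (- 34913346639935774400) |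
        MEK_pRAF \<Rightarrow> 1836388317314277030000 |
        pMEK_pRAF \<Rightarrow> 3426740704452096000000 |
        ERK_ppMEK \<Rightarrow> (- 1322183360922011336962) |
        pERK_ppMEK \<Rightarrow> (- 357722603820190187520) |
        RAF_RAFPH \<Rightarrow> 275244292732416000000 |
        ppMEK_PH \<Rightarrow> (- 7359964841195499603200) |
        pMEK_PH \<Rightarrow> (- 96104018753827328000) |
        ppERK_PH \<Rightarrow> (- 410177216973487929920) |
        pERK_PH \<Rightarrow> 98631562324752297280 | _ \<Rightarrow> 0) |
      pMEK_PH \<Rightarrow> (case b of
        pRAF \<Rightarrow> (- 850909666812169440000) | pMEK \<Rightarrow> 7238958568650240000000 |
        ppMEK \<Rightarrow> 101795419305106390860 | pERK \<Rightarrow> (- 1765912242296359680) |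
        ppERK \<Rightarrow> 93211182835860960 | RAS_RAF \<Rightarrow> (- 247121799011064000) |
        MEK_pRAF \<Rightarrow> 220090974365438690000 |
        pMEK_pRAF \<Rightarrow> 322820405813760000000 |
        ERK_ppMEK \<Rightarrow> 112730918485434618636 |
        pERK_ppMEK \<Rightarrow> 113281019914064732160 |
        RAF_RAFPH \<Rightarrow> (- 359448371758080000000) |
        ppMEK_PH \<Rightarrow> 94606952752076044800 |
        pMEK_PH \<Rightarrow> (- 7359381031361607680000) |
        ppERK_PH \<Rightarrow> (- 25897991203674426240) |
        pERK_PH \<Rightarrow> (- 25204405781475109440) | _ \<Rightarrow> 0) |
      ppERK_PH \<Rightarrow> (case b of
        pRAF \<Rightarrow> 848533341524133760000 | pMEK \<Rightarrow> (- 116497441337856000000) |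
        ppMEK \<Rightarrow> 166969646028250493310 | pERK \<Rightarrow> (- 4630289610850543096320) |
        ppERK \<Rightarrow> (- 1716873699984237181440) |
        RAS_RAF \<Rightarrow> 22629546557027604000 | MEK_pRAF \<Rightarrow> 848597228144858040000 |
        pMEK_pRAF \<Rightarrow> 943647794906880000000 |
        ERK_ppMEK \<Rightarrow> 274254495473746392606 |
        pERK_ppMEK \<Rightarrow> (- 1074580442461266186240) |
        RAF_RAFPH \<Rightarrow> 779113834425600000000 |
        ppMEK_PH \<Rightarrow> 409831585810568233600 | pMEK_PH \<Rightarrow> 26436386641515520000 |
        ppERK_PH \<Rightarrow> (- 7359090155551287511040) |
        pERK_PH \<Rightarrow> (- 623557227615379629440) | _ \<Rightarrow> 0) |
      pERK_PH \<Rightarrow> (case b of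
        pRAF \<Rightarrow> 851734509127305280000 | pMEK \<Rightarrow> 181861811730432000000 |
        ppMEK \<Rightarrow> (- 300293678622999188040) |
        pERK \<Rightarrow> (- 54063230303064948480) | ppERK \<Rightarrow> 289312003749841866240 |
        RAS_RAF \<Rightarrow> 22385587129645017600 | MEK_pRAF \<Rightarrow> 853284571853289380000 |
        pMEK_pRAF \<Rightarrow> 635360950112256000000 |
        ERK_ppMEK \<Rightarrow> 247150961710674864696 |
        pERK_ppMEK \<Rightarrow> (- 841695577997969264640) |
        RAF_RAFPH \<Rightarrow> 782311221336576000000 |
        ppMEK_PH \<Rightarrow> (- 99864703802198233600) |
        pMEK_PH \<Rightarrow> 22714641469330944000 | ppERK_PH \<Rightarrow> 623136324918402959360 |
        pERK_PH \<Rightarrow> (- 7360145597647195627840) | _ \<Rightarrow> 0) |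
      _ \<Rightarrow> 0)"

lemma positive_steady_state_xs1: "positive_steady_state rates xs1"
  unfolding positive_steady_state_def vec_eq_iff
proof (intro conjI allI)
  fix s
  show "0 < xs1 $ s" and "fld rates xs1 $ s = 0 $ s"
    by (cases s; simp add: xs1_def fld_nth rates_nth)+
qed

lemma fld_expansion_xs1:
  assumes "a \<in> free_species" and "v \<in> cons_kernel"
  shows "fld rates (xs1 + v) $ a = (\<Sum>c\<in>UNIV. A1 a c * v$c) / jac_scale + fld_quad rates v $ a"
  using assms(1) unfolding free_species_def sum_UNIV_species
  by (auto simp: assms(2)[unfolded mem_cons_kernel_iff] fld_nth fld_quad_nth rates_nth xs1_def A1_def jac_scale_def field_simps)

lemma Q1_eq:
  "Q1 a b = (\<Sum>j\<in>UNIV. R1 j a * R1 j b) + (if a = b \<and> a \<in> free_species then \<mu>1 else 0)"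
  unfolding sum_UNIV_species
  by (cases a; cases b) (simp_all add: Q1_def R1_def free_species_def \<mu>1_def)

lemma R1_eq_0: "a \<notin> free_species \<Longrightarrow> R1 j a = 0"
  by (cases a; cases j) (simp_all add: R1_def free_species_def)

lemma N1_eq: "2 * (\<Sum>a\<in>UNIV. Q1 a b * A1 a c) = N1 b c"
  unfolding sum_UNIV_species by (cases b; cases c) (simp_all add: Q1_def A1_def N1_def)

lemma N1_diag_dominant:
  "N1 b b + (\<Sum>c\<in>UNIV-{b}. \<bar>N1 b c + N1 c b\<bar> / 2) \<le> (if b \<in> free_species then -1 else 0)"
  by (cases b) (simp_all add: sum_diff1 sum_UNIV_species N1_def free_species_def)

lemma asympt_stable_xs1: "asympt_stable rates xs1"
  by (rule erk_certificate.asympt_stable[OF erk_certificate.intro[OF rates_nonneg fld_expansion_xs1 _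
        Q1_eq R1_eq_0 _ N1_eq N1_diag_dominant]])
    (simp_all add: jac_scale_def \<mu>1_def)

definition xs2 :: "real^species" where
  "xs2 = (\<chi> s. case s of
     RAF \<Rightarrow> (275241 / 5120) | pRAF \<Rightarrow> (375 / 8) |
     MEK \<Rightarrow> (576647 / 25600) | pMEK \<Rightarrow> (3 / 80) |
     ppMEK \<Rightarrow> (25 / 16) | ERK \<Rightarrow> (3716197 / 51200) |
     pERK \<Rightarrow> (125 / 16) | ppERK \<Rightarrow> (3125 / 64) | RAS \<Rightarrow> 75 |
     RAFPH \<Rightarrow> (3 / 10) | PH \<Rightarrow> (53997 / 12800) | RAS_RAF \<Rightarrow> 125 |
     MEK_pRAF \<Rightarrow> 250 | pMEK_pRAF \<Rightarrow> (15 / 256) |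
     ERK_ppMEK \<Rightarrow> (75 / 16) | pERK_ppMEK \<Rightarrow> (15625 / 64) |
     RAF_RAFPH \<Rightarrow> (1 / 8) | ppMEK_PH \<Rightarrow> (375 / 64) |
     pMEK_PH \<Rightarrow> (5 / 2) | ppERK_PH \<Rightarrow> (125 / 512) |
     pERK_PH \<Rightarrow> (25 / 8))"

definition A2 :: "species \<Rightarrow> species \<Rightarrow> real" where
  "A2 a b = (case a of
      pRAF \<Rightarrow> (case b of
        pRAF \<Rightarrow> (- 46621360000) | pMEK \<Rightarrow> 60000000000 |
        ppMEK \<Rightarrow> 96000000000 | RAS_RAF \<Rightarrow> 15360000 |
        MEK_pRAF \<Rightarrow> 104649705000 | pMEK_pRAF \<Rightarrow> 119040000000 |
        ERK_ppMEK \<Rightarrow> 96000000000 | pERK_ppMEK \<Rightarrow> 96000000000 |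
        RAF_RAFPH \<Rightarrow> 229440000000 | ppMEK_PH \<Rightarrow> 96000000000 |
        pMEK_PH \<Rightarrow> 96000000000 | _ \<Rightarrow> 0) |
      pMEK \<Rightarrow> (case b of
        pRAF \<Rightarrow> (- 28800000) | pMEK \<Rightarrow> (- 13859232000000) |
        MEK_pRAF \<Rightarrow> 1638400000 | pMEK_pRAF \<Rightarrow> 7680000000 |
        ppMEK_PH \<Rightarrow> 123033600000 | pMEK_PH \<Rightarrow> 166388480000 |
        ppERK_PH \<Rightarrow> 122880000000 | pERK_PH \<Rightarrow> 122880000000 |
        _ \<Rightarrow> 0) |
      ppMEK \<Rightarrow> (case b of
        ppMEK \<Rightarrow> (- 3225364047) | pERK \<Rightarrow> (- 19920000) |
        ppERK \<Rightarrow> 4080000 | pMEK_pRAF \<Rightarrow> 15360000000 |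
        ERK_ppMEK \<Rightarrow> 67255349 | pERK_ppMEK \<Rightarrow> 4848000 |
        ppMEK_PH \<Rightarrow> 1703956800 | pMEK_PH \<Rightarrow> 1080000000 |
        ppERK_PH \<Rightarrow> 1084080000 | pERK_PH \<Rightarrow> 1084080000 | _ \<Rightarrow> 0) |
      pERK \<Rightarrow> (case b of
        ppMEK \<Rightarrow> (- 120000000) | pERK \<Rightarrow> (- 75837120) |
        ERK_ppMEK \<Rightarrow> 40960000 | pERK_ppMEK \<Rightarrow> 614400 |
        ppMEK_PH \<Rightarrow> 96000000 | pMEK_PH \<Rightarrow> 96000000 |
        ppERK_PH \<Rightarrow> 249600000 | pERK_PH \<Rightarrow> 164152800 | _ \<Rightarrow> 0) |
      ppERK \<Rightarrow> (case b of
        ppERK \<Rightarrow> (- 1079940) | pERK_ppMEK \<Rightarrow> 153600 |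
        ppMEK_PH \<Rightarrow> 12500000 | pMEK_PH \<Rightarrow> 12500000 |
        ppERK_PH \<Rightarrow> 74888000 | pERK_PH \<Rightarrow> 12500000 | _ \<Rightarrow> 0) |
      RAS_RAF \<Rightarrow> (case b of
        pRAF \<Rightarrow> (- 192000000) | RAS_RAF \<Rightarrow> (- 412192800) |
        MEK_pRAF \<Rightarrow> (- 192000000) | pMEK_pRAF \<Rightarrow> (- 192000000) |
        RAF_RAFPH \<Rightarrow> (- 192000000) | _ \<Rightarrow> 0) |
      MEK_pRAF \<Rightarrow> (case b of
        pRAF \<Rightarrow> 46131760000 | pMEK \<Rightarrow> (- 96000000000) |
        ppMEK \<Rightarrow> (- 96000000000) | MEK_pRAF \<Rightarrow> (- 104649705000) |
        pMEK_pRAF \<Rightarrow> (- 96000000000) | ERK_ppMEK \<Rightarrow> (- 96000000000) |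
        pERK_ppMEK \<Rightarrow> (- 96000000000) | ppMEK_PH \<Rightarrow> (- 96000000000) |
        pMEK_PH \<Rightarrow> (- 96000000000) | _ \<Rightarrow> 0) |
      pMEK_pRAF \<Rightarrow> (case b of
        pRAF \<Rightarrow> 28800000 | pMEK \<Rightarrow> 36000000000 |
        pMEK_pRAF \<Rightarrow> (- 23040000000) | _ \<Rightarrow> 0) |
      ERK_ppMEK \<Rightarrow> (case b of
        ppMEK \<Rightarrow> 189526047 | pERK \<Rightarrow> (- 4080000) |
        ppERK \<Rightarrow> (- 4080000) | ERK_ppMEK \<Rightarrow> (- 67255349) |
        pERK_ppMEK \<Rightarrow> (- 4080000) | ppERK_PH \<Rightarrow> (- 4080000) |
        pERK_PH \<Rightarrow> (- 4080000) | _ \<Rightarrow> 0) |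
      pERK_ppMEK \<Rightarrow> (case b of
        ppMEK \<Rightarrow> 120000000 | pERK \<Rightarrow> 24000000 |
        pERK_ppMEK \<Rightarrow> (- 768000) | _ \<Rightarrow> 0) |
      RAF_RAFPH \<Rightarrow> (case b of
        pRAF \<Rightarrow> 460800000 | RAF_RAFPH \<Rightarrow> (- 244800000000) | _ \<Rightarrow> 0) |
      ppMEK_PH \<Rightarrow> (case b of
        ppMEK \<Rightarrow> 2915838000 | ppMEK_PH \<Rightarrow> (- 1857556800) |
        pMEK_PH \<Rightarrow> (- 1080000000) | ppERK_PH \<Rightarrow> (- 1080000000) |
        pERK_PH \<Rightarrow> (- 1080000000) | _ \<Rightarrow> 0) |
      pMEK_PH \<Rightarrow> (case b of
        pMEK \<Rightarrow> 13823232000000 | ppMEK_PH \<Rightarrow> (- 122880000000) |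
        pMEK_PH \<Rightarrow> (- 330228480000) | ppERK_PH \<Rightarrow> (- 122880000000) |
        pERK_PH \<Rightarrow> (- 122880000000) | _ \<Rightarrow> 0) |
      ppERK_PH \<Rightarrow> (case b of
        ppERK \<Rightarrow> 1079940 | ppMEK_PH \<Rightarrow> (- 12500000) |
        pMEK_PH \<Rightarrow> (- 12500000) | ppERK_PH \<Rightarrow> (- 228488000) |
        pERK_PH \<Rightarrow> (- 12500000) | _ \<Rightarrow> 0) |
      pERK_PH \<Rightarrow> (case b of
        pERK \<Rightarrow> 51837120 | ppMEK_PH \<Rightarrow> (- 96000000) |
        pMEK_PH \<Rightarrow> (- 96000000) | ppERK_PH \<Rightarrow> (- 96000000) |
        pERK_PH \<Rightarrow> (- 225592800) | _ \<Rightarrow> 0) |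
      _ \<Rightarrow> 0)"

definition R2 :: "species \<Rightarrow> species \<Rightarrow> real" where
  "R2 a b = (case a of
      pRAF \<Rightarrow> (case b of
        pRAF \<Rightarrow> 32497680 | pMEK \<Rightarrow> 158529 | ppMEK \<Rightarrow> 51430130 |
        pERK \<Rightarrow> 63232908 | ppERK \<Rightarrow> (- 4602232) |
        RAS_RAF \<Rightarrow> 1036108 | MEK_pRAF \<Rightarrow> 32497696 |
        pMEK_pRAF \<Rightarrow> 66825958 | ERK_ppMEK \<Rightarrow> 90910780 |
        pERK_ppMEK \<Rightarrow> 59246030 | RAF_RAFPH \<Rightarrow> 30457313 |
        ppMEK_PH \<Rightarrow> 51116909 | pMEK_PH \<Rightarrow> 69543 |
        ppERK_PH \<Rightarrow> 78395143 | pERK_PH \<Rightarrow> 91194404 | _ \<Rightarrow> 0) |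
      pMEK \<Rightarrow> (case b of
        pMEK \<Rightarrow> 221884 | ppMEK \<Rightarrow> 10382571 | pERK \<Rightarrow> 8566398 |
        ppERK \<Rightarrow> 2193058 | RAS_RAF \<Rightarrow> 118854 |
        MEK_pRAF \<Rightarrow> (- 91574) | pMEK_pRAF \<Rightarrow> 6921071 |
        ERK_ppMEK \<Rightarrow> 14420400 | pERK_ppMEK \<Rightarrow> 12810843 |
        RAF_RAFPH \<Rightarrow> (- 7519) | ppMEK_PH \<Rightarrow> 10295938 |
        pMEK_PH \<Rightarrow> 203765 | ppERK_PH \<Rightarrow> 12745725 |
        pERK_PH \<Rightarrow> 14057725 | _ \<Rightarrow> 0) |
      ppMEK \<Rightarrow> (case b of
        ppMEK \<Rightarrow> 24904581 | pERK \<Rightarrow> 20961075 | ppERK \<Rightarrow> 3564448 |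
        RAS_RAF \<Rightarrow> 296107 | MEK_pRAF \<Rightarrow> 36695 |
        pMEK_pRAF \<Rightarrow> 16628440 | ERK_ppMEK \<Rightarrow> 34954132 |
        pERK_ppMEK \<Rightarrow> 30625101 | RAF_RAFPH \<Rightarrow> 3198 |
        ppMEK_PH \<Rightarrow> 24850874 | pMEK_PH \<Rightarrow> (- 43046) |
        ppERK_PH \<Rightarrow> 30718633 | pERK_PH \<Rightarrow> 34617586 | _ \<Rightarrow> 0) |
      pERK \<Rightarrow> (case b of
        pERK \<Rightarrow> 18320575 | ppERK \<Rightarrow> (- 7920992) |
        RAS_RAF \<Rightarrow> 200966 | MEK_pRAF \<Rightarrow> 2608 | pMEK_pRAF \<Rightarrow> 9774 |
        ERK_ppMEK \<Rightarrow> 10383661 | pERK_ppMEK \<Rightarrow> 5124829 |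
        RAF_RAFPH \<Rightarrow> 779 | ppMEK_PH \<Rightarrow> (- 32186) |
        pMEK_PH \<Rightarrow> (- 4) | ppERK_PH \<Rightarrow> 12671533 |
        pERK_PH \<Rightarrow> 14986525 | _ \<Rightarrow> 0) |
      ppERK \<Rightarrow> (case b of
        ppERK \<Rightarrow> 87616847 | RAS_RAF \<Rightarrow> (- 8442) |
        MEK_pRAF \<Rightarrow> 860 | pMEK_pRAF \<Rightarrow> (- 74) |
        ERK_ppMEK \<Rightarrow> (- 914351) | pERK_ppMEK \<Rightarrow> (- 4960044) |
        RAF_RAFPH \<Rightarrow> 11 | ppMEK_PH \<Rightarrow> 284115 | pMEK_PH \<Rightarrow> 7 |
        ppERK_PH \<Rightarrow> 26396389 | pERK_PH \<Rightarrow> 2099350 | _ \<Rightarrow> 0) |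
      RAS_RAF \<Rightarrow> (case b of
        RAS_RAF \<Rightarrow> 3498937 | MEK_pRAF \<Rightarrow> 46 | pMEK_pRAF \<Rightarrow> 671 |
        ERK_ppMEK \<Rightarrow> 392550 | pERK_ppMEK \<Rightarrow> (- 525172) |
        RAF_RAFPH \<Rightarrow> (- 129) | ppMEK_PH \<Rightarrow> (- 5671) |
        pMEK_PH \<Rightarrow> (- 1) | ppERK_PH \<Rightarrow> 115242 |
        pERK_PH \<Rightarrow> 184607 | _ \<Rightarrow> 0) |
      MEK_pRAF \<Rightarrow> (case b of
        MEK_pRAF \<Rightarrow> 236639 | pMEK_pRAF \<Rightarrow> 107917 |
        ERK_ppMEK \<Rightarrow> 13039 | pERK_ppMEK \<Rightarrow> (- 4128) |
        RAF_RAFPH \<Rightarrow> 64919 | ppMEK_PH \<Rightarrow> (- 28029) |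
        pMEK_PH \<Rightarrow> 406 | ppERK_PH \<Rightarrow> 49523 | pERK_PH \<Rightarrow> 45778 |
        _ \<Rightarrow> 0) |
      pMEK_pRAF \<Rightarrow> (case b of
        pMEK_pRAF \<Rightarrow> 647428 | ERK_ppMEK \<Rightarrow> 281207 |
        pERK_ppMEK \<Rightarrow> (- 61920) | RAF_RAFPH \<Rightarrow> 28441 |
        ppMEK_PH \<Rightarrow> 150707 | pMEK_PH \<Rightarrow> (- 1750) |
        ppERK_PH \<Rightarrow> 186411 | pERK_PH \<Rightarrow> 296517 | _ \<Rightarrow> 0) |
      ERK_ppMEK \<Rightarrow> (case b of
        ERK_ppMEK \<Rightarrow> 10744934 | pERK_ppMEK \<Rightarrow> (- 9076887) |
        RAF_RAFPH \<Rightarrow> (- 282) | ppMEK_PH \<Rightarrow> (- 192400) |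
        ppERK_PH \<Rightarrow> 1983088 | pERK_PH \<Rightarrow> 3104318 | _ \<Rightarrow> 0) |
      pERK_ppMEK \<Rightarrow> (case b of
        pERK_ppMEK \<Rightarrow> 14429246 | RAF_RAFPH \<Rightarrow> (- 537) |
        ppMEK_PH \<Rightarrow> (- 291954) | pMEK_PH \<Rightarrow> 1 |
        ppERK_PH \<Rightarrow> 966081 | pERK_PH \<Rightarrow> 1730333 | _ \<Rightarrow> 0) |
      RAF_RAFPH \<Rightarrow> (case b of
        RAF_RAFPH \<Rightarrow> 172798 | ppMEK_PH \<Rightarrow> (- 18551) |
        pMEK_PH \<Rightarrow> (- 163) | ppERK_PH \<Rightarrow> (- 40415) |
        pERK_PH \<Rightarrow> (- 52300) | _ \<Rightarrow> 0) |
      ppMEK_PH \<Rightarrow> (case b of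
        ppMEK_PH \<Rightarrow> 1467339 | pMEK_PH \<Rightarrow> (- 22) |
        ppERK_PH \<Rightarrow> (- 381517) | pERK_PH \<Rightarrow> (- 838077) | _ \<Rightarrow> 0) |
      pMEK_PH \<Rightarrow> (case b of
        pMEK_PH \<Rightarrow> 1771 | ppERK_PH \<Rightarrow> 54138 | pERK_PH \<Rightarrow> 59382 |
        _ \<Rightarrow> 0) |
      ppERK_PH \<Rightarrow> (case b of
        ppERK_PH \<Rightarrow> 6241603 | pERK_PH \<Rightarrow> 1552441 | _ \<Rightarrow> 0) |
      pERK_PH \<Rightarrow> (case b of
        pERK_PH \<Rightarrow> 6535034 | _ \<Rightarrow> 0) |
      _ \<Rightarrow> 0)"

definition \<mu>2 :: real where
  "\<mu>2 = 355358274"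

definition Q2 :: "species \<Rightarrow> species \<Rightarrow> real" where
  "Q2 a b = (case a of
      pRAF \<Rightarrow> (case b of
        pRAF \<Rightarrow> 1056099560740674 | pMEK \<Rightarrow> 5151824712720 |
        ppMEK \<Rightarrow> 1671359907098400 | pERK \<Rightarrow> 2054922809653440 |
        ppERK \<Rightarrow> (- 149561862821760) | RAS_RAF \<Rightarrow> 33671106229440 |
        MEK_pRAF \<Rightarrow> 1056099725345280 | pMEK_pRAF \<Rightarrow> 2171688598777440 |
        ERK_ppMEK \<Rightarrow> 2954389436990400 | pERK_ppMEK \<Rightarrow> 1925358524210400 |
        RAF_RAFPH \<Rightarrow> 989792011533840 | ppMEK_PH \<Rightarrow> 1661180951271120 |
        pMEK_PH \<Rightarrow> 2259986160240 | ppERK_PH \<Rightarrow> 2547660270768240 |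
        pERK_PH \<Rightarrow> 2963606558982720 | _ \<Rightarrow> 0) |
      pMEK \<Rightarrow> (case b of
        pRAF \<Rightarrow> 5151824712720 | pMEK \<Rightarrow> 74719311571 |
        ppMEK \<Rightarrow> 10456893462534 | pERK \<Rightarrow> 11924996326164 |
        ppERK \<Rightarrow> (- 242982755456) | RAS_RAF \<Rightarrow> 190624966068 |
        MEK_pRAF \<Rightarrow> 5131508443768 | pMEK_pRAF \<Rightarrow> 12129527213546 |
        ERK_ppMEK \<Rightarrow> 17611651076220 | pERK_ppMEK \<Rightarrow> 12234734978082 |
        RAF_RAFPH \<Rightarrow> 4826699026781 | ppMEK_PH \<Rightarrow> 10388016374053 |
        pMEK_PH \<Rightarrow> 56236775507 | ppERK_PH \<Rightarrow> 15255976070547 |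
        pERK_PH \<Rightarrow> 17576141925616 | _ \<Rightarrow> 0) |
      ppMEK \<Rightarrow> (case b of
        pRAF \<Rightarrow> 1671359907098400 | pMEK \<Rightarrow> 10456893462534 |
        ppMEK \<Rightarrow> 3373094562530776 | pERK \<Rightarrow> 3863044704351873 |
        ppERK \<Rightarrow> (- 125152725721754) | RAS_RAF \<Rightarrow> 61895599993841 |
        MEK_pRAF \<Rightarrow> 1671323830023521 | pMEK_pRAF \<Rightarrow> 3922850549251721 |
        ERK_ppMEK \<Rightarrow> 5695792072328492 | pERK_ppMEK \<Rightarrow> 3942745820388934 |
        RAF_RAFPH \<Rightarrow> 1566425145339379 | ppMEK_PH \<Rightarrow> 3354748186818562 |
        pMEK_PH \<Rightarrow> 4620167516679 | ppERK_PH \<Rightarrow> 4929240474375338 |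
        pERK_PH \<Rightarrow> 5698231855464961 | _ \<Rightarrow> 0) |
      pERK \<Rightarrow> (case b of
        pRAF \<Rightarrow> 2054922809653440 | pMEK \<Rightarrow> 11924996326164 |
        ppMEK \<Rightarrow> 3863044704351873 | pERK \<Rightarrow> 4846794317675392 |
        ppERK \<Rightarrow> (- 342628371134372) | RAS_RAF \<Rightarrow> 76422806220431 |
        MEK_pRAF \<Rightarrow> 2054956308756241 | pMEK_pRAF \<Rightarrow> 4633617346271172 |
        ERK_ppMEK \<Rightarrow> 6794994696204415 | pERK_ppMEK \<Rightarrow> 4591866397209004 |
        RAF_RAFPH \<Rightarrow> 1925921365355417 | ppMEK_PH \<Rightarrow> 3840781274435296 |
        pMEK_PH \<Rightarrow> 5240574492764 | ppERK_PH \<Rightarrow> 5942383159016344 |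
        pERK_PH \<Rightarrow> 6887094997288207 | _ \<Rightarrow> 0) |
      ppERK \<Rightarrow> (case b of
        pRAF \<Rightarrow> (- 149561862821760) | pMEK \<Rightarrow> (- 242982755456) |
        ppMEK \<Rightarrow> (- 125152725721754) | pERK \<Rightarrow> (- 342628371134372) |
        ppERK \<Rightarrow> 7778149680161639 | RAS_RAF \<Rightarrow> (- 5783809174234) |
        MEK_pRAF \<Rightarrow> (- 149577273590120) | pMEK_pRAF \<Rightarrow> (- 233182945934504) |
        ERK_ppMEK \<Rightarrow> (- 424536988761633) |
        pERK_ppMEK \<Rightarrow> (- 610584619173454) |
        RAF_RAFPH \<Rightarrow> (- 140181917688465) | ppMEK_PH \<Rightarrow> (- 98944431481015) |
        pMEK_PH \<Rightarrow> (- 25974783317) | ppERK_PH \<Rightarrow> 1989051713222205 |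
        pERK_PH \<Rightarrow> (- 200245529737500) | _ \<Rightarrow> 0) |
      RAS_RAF \<Rightarrow> (case b of
        pRAF \<Rightarrow> 33671106229440 | pMEK \<Rightarrow> 190624966068 |
        ppMEK \<Rightarrow> 61895599993841 | pERK \<Rightarrow> 76422806220431 |
        ppERK \<Rightarrow> (- 5783809174234) | RAS_RAF \<Rightarrow> 13458699505192 |
        MEK_pRAF \<Rightarrow> 33671782327647 | pMEK_pRAF \<Rightarrow> 74989616800297 |
        ERK_ppMEK \<Rightarrow> 109725461316982 | pERK_ppMEK \<Rightarrow> 71210457701067 |
        RAF_RAFPH \<Rightarrow> 31556824041543 | ppMEK_PH \<Rightarrow> 61516160250509 |
        pMEK_PH \<Rightarrow> 83521760137 | ppERK_PH \<Rightarrow> 94563650967019 |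
        pERK_PH \<Rightarrow> 110048565457693 | _ \<Rightarrow> 0) |
      MEK_pRAF \<Rightarrow> (case b of
        pRAF \<Rightarrow> 1056099725345280 | pMEK \<Rightarrow> 5131508443768 |
        ppMEK \<Rightarrow> 1671323830023521 | pERK \<Rightarrow> 2054956308756241 |
        ppERK \<Rightarrow> (- 149577273590120) | RAS_RAF \<Rightarrow> 33671782327647 |
        MEK_pRAF \<Rightarrow> 1056166338546892 | pMEK_pRAF \<Rightarrow> 2171691621271595 |
        ERK_ppMEK \<Rightarrow> 2954382397566269 | pERK_ppMEK \<Rightarrow> 1925318219003681 |
        RAF_RAFPH \<Rightarrow> 989808669148763 | ppMEK_PH \<Rightarrow> 1661144359119097 |
        pMEK_PH \<Rightarrow> 2239844194824 | ppERK_PH \<Rightarrow> 2547689040934246 |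
        pERK_PH \<Rightarrow> 2963642719952568 | _ \<Rightarrow> 0) |
      pMEK_pRAF \<Rightarrow> (case b of
        pRAF \<Rightarrow> 2171688598777440 | pMEK \<Rightarrow> 12129527213546 |
        ppMEK \<Rightarrow> 3922850549251721 | pERK \<Rightarrow> 4633617346271172 |
        ppERK \<Rightarrow> (- 233182945934504) | RAS_RAF \<Rightarrow> 74989616800297 |
        MEK_pRAF \<Rightarrow> 2171691621271595 | pMEK_pRAF \<Rightarrow> 4790546163677545 |
        ERK_ppMEK \<Rightarrow> 6756522554370717 | pERK_ppMEK \<Rightarrow> 4557094691400387 |
        RAF_RAFPH \<Rightarrow> 2035365684439169 | ppMEK_PH \<Rightarrow> 3900520806800268 |
        pMEK_PH \<Rightarrow> 5340672576286 | ppERK_PH \<Rightarrow> 5838095554548626 |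
        pERK_PH \<Rightarrow> 6767427736555796 | _ \<Rightarrow> 0) |
      ERK_ppMEK \<Rightarrow> (case b of
        pRAF \<Rightarrow> 2954389436990400 | pMEK \<Rightarrow> 17611651076220 |
        ppMEK \<Rightarrow> 5695792072328492 | pERK \<Rightarrow> 6794994696204415 |
        ppERK \<Rightarrow> (- 424536988761633) | RAS_RAF \<Rightarrow> 109725461316982 |
        MEK_pRAF \<Rightarrow> 2954382397566269 | pMEK_pRAF \<Rightarrow> 6756522554370717 |
        ERK_ppMEK \<Rightarrow> 9918852958673446 | pERK_ppMEK \<Rightarrow> 6601309636506855 |
        RAF_RAFPH \<Rightarrow> 2768915280251524 | ppMEK_PH \<Rightarrow> 5661568816418845 |
        pMEK_PH \<Rightarrow> 7755410467401 | ppERK_PH \<Rightarrow> 8513352995948636 |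
        pERK_PH \<Rightarrow> 9890507678884870 | _ \<Rightarrow> 0) |
      pERK_ppMEK \<Rightarrow> (case b of
        pRAF \<Rightarrow> 1925358524210400 | pMEK \<Rightarrow> 12234734978082 |
        ppMEK \<Rightarrow> 3942745820388934 | pERK \<Rightarrow> 4591866397209004 |
        ppERK \<Rightarrow> (- 610584619173454) | RAS_RAF \<Rightarrow> 71210457701067 |
        MEK_pRAF \<Rightarrow> 1925318219003681 | pMEK_pRAF \<Rightarrow> 4557094691400387 |
        ERK_ppMEK \<Rightarrow> 6601309636506855 | pERK_ppMEK \<Rightarrow> 4953845519006854 |
        RAF_RAFPH \<Rightarrow> 1804473281615046 | ppMEK_PH \<Rightarrow> 3917387404066824 |
        pMEK_PH \<Rightarrow> 5412326409365 | ppERK_PH \<Rightarrow> 5678525188893321 |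
        pERK_PH \<Rightarrow> 6706229637401530 | _ \<Rightarrow> 0) |
      RAF_RAFPH \<Rightarrow> (case b of
        pRAF \<Rightarrow> 989792011533840 | pMEK \<Rightarrow> 4826699026781 |
        ppMEK \<Rightarrow> 1566425145339379 | pERK \<Rightarrow> 1925921365355417 |
        ppERK \<Rightarrow> (- 140181917688465) | RAS_RAF \<Rightarrow> 31556824041543 |
        MEK_pRAF \<Rightarrow> 989808669148763 | pMEK_pRAF \<Rightarrow> 2035365684439169 |
        ERK_ppMEK \<Rightarrow> 2768915280251524 | pERK_ppMEK \<Rightarrow> 1804473281615046 |
        RAF_RAFPH \<Rightarrow> 927683220808150 | ppMEK_PH \<Rightarrow> 1556885205830213 |
        pMEK_PH \<Rightarrow> 2116371563659 | ppERK_PH \<Rightarrow> 2387718412782491 |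
        pERK_PH \<Rightarrow> 2777553750423809 | _ \<Rightarrow> 0) |
      ppMEK_PH \<Rightarrow> (case b of
        pRAF \<Rightarrow> 1661180951271120 | pMEK \<Rightarrow> 10388016374053 |
        ppMEK \<Rightarrow> 3354748186818562 | pERK \<Rightarrow> 3840781274435296 |
        ppERK \<Rightarrow> (- 98944431481015) | RAS_RAF \<Rightarrow> 61516160250509 |
        MEK_pRAF \<Rightarrow> 1661144359119097 | pMEK_pRAF \<Rightarrow> 3900520806800268 |
        ERK_ppMEK \<Rightarrow> 5661568816418845 | pERK_ppMEK \<Rightarrow> 3917387404066824 |
        RAF_RAFPH \<Rightarrow> 1556885205830213 | ppMEK_PH \<Rightarrow> 3338891989371665 |
        pMEK_PH \<Rightarrow> 4582741743550 | ppERK_PH \<Rightarrow> 4907826616819832 |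
        pERK_PH \<Rightarrow> 5664416019896025 | _ \<Rightarrow> 0) |
      pMEK_PH \<Rightarrow> (case b of
        pRAF \<Rightarrow> 2259986160240 | pMEK \<Rightarrow> 56236775507 |
        ppMEK \<Rightarrow> 4620167516679 | pERK \<Rightarrow> 5240574492764 |
        ppERK \<Rightarrow> (- 25974783317) | RAS_RAF \<Rightarrow> 83521760137 |
        MEK_pRAF \<Rightarrow> 2239844194824 | pMEK_pRAF \<Rightarrow> 5340672576286 |
        ERK_ppMEK \<Rightarrow> 7755410467401 | pERK_ppMEK \<Rightarrow> 5412326409365 |
        RAF_RAFPH \<Rightarrow> 2116371563659 | ppMEK_PH \<Rightarrow> 4582741743550 |
        pMEK_PH \<Rightarrow> 48571111361 | ppERK_PH \<Rightarrow> 6726591494091 |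
        pERK_PH \<Rightarrow> 7715844269351 | _ \<Rightarrow> 0) |
      ppERK_PH \<Rightarrow> (case b of
        pRAF \<Rightarrow> 2547660270768240 | pMEK \<Rightarrow> 15255976070547 |
        ppMEK \<Rightarrow> 4929240474375338 | pERK \<Rightarrow> 5942383159016344 |
        ppERK \<Rightarrow> 1989051713222205 | RAS_RAF \<Rightarrow> 94563650967019 |
        MEK_pRAF \<Rightarrow> 2547689040934246 | pMEK_pRAF \<Rightarrow> 5838095554548626 |
        ERK_ppMEK \<Rightarrow> 8513352995948636 | pERK_ppMEK \<Rightarrow> 5678525188893321 |
        RAF_RAFPH \<Rightarrow> 2387718412782491 | ppMEK_PH \<Rightarrow> 4907826616819832 |
        pMEK_PH \<Rightarrow> 6726591494091 | ppERK_PH \<Rightarrow> 8153247981669933 |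
        pERK_PH \<Rightarrow> 8655018047111490 | _ \<Rightarrow> 0) |
      pERK_PH \<Rightarrow> (case b of
        pRAF \<Rightarrow> 2963606558982720 | pMEK \<Rightarrow> 17576141925616 |
        ppMEK \<Rightarrow> 5698231855464961 | pERK \<Rightarrow> 6887094997288207 |
        ppERK \<Rightarrow> (- 200245529737500) | RAS_RAF \<Rightarrow> 110048565457693 |
        MEK_pRAF \<Rightarrow> 2963642719952568 | pMEK_pRAF \<Rightarrow> 6767427736555796 |
        ERK_ppMEK \<Rightarrow> 9890507678884870 | pERK_ppMEK \<Rightarrow> 6706229637401530 |
        RAF_RAFPH \<Rightarrow> 2777553750423809 | ppMEK_PH \<Rightarrow> 5664416019896025 |
        pMEK_PH \<Rightarrow> 7715844269351 | ppERK_PH \<Rightarrow> 8655018047111490 |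
        pERK_PH \<Rightarrow> 10000000088161161 | _ \<Rightarrow> 0) |
      _ \<Rightarrow> 0)"

definition N2 :: "species \<Rightarrow> species \<Rightarrow> real" where
  "N2 a b = (case a of
      pRAF \<Rightarrow> (case b of
        pRAF \<Rightarrow> (- 10062371653300351680000) |
        pMEK \<Rightarrow> 2337320296529280000000 |
        ppMEK \<Rightarrow> (- 5278752727908327432000) |
        pERK \<Rightarrow> (- 2706785093844226252800) |
        ppERK \<Rightarrow> (- 4643844822020350800000) |
        RAS_RAF \<Rightarrow> 4685403394332873216000 |
        MEK_pRAF \<Rightarrow> 3917342779616853540000 |
        pMEK_pRAF \<Rightarrow> 4004192039592960000000 |
        ERK_ppMEK \<Rightarrow> (- 4273525137926979816000) |
        pERK_ppMEK \<Rightarrow> (- 8412123179911449600000) |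
        RAF_RAFPH \<Rightarrow> 7867880920316160000000 |
        ppMEK_PH \<Rightarrow> (- 5274340318992676992000) |
        pMEK_PH \<Rightarrow> 1842084609252700800000 |
        ppERK_PH \<Rightarrow> (- 7600103925773280000000) |
        pERK_PH \<Rightarrow> (- 7709224560854621568000) | _ \<Rightarrow> 0) |
      pMEK \<Rightarrow> (case b of
        pRAF \<Rightarrow> (- 1849674474208637440000) |
        pMEK \<Rightarrow> (- 10061254656933696000000) |
        ppMEK \<Rightarrow> 3775763475921757202484 | pERK \<Rightarrow> 40431972115284756480 |
        ppERK \<Rightarrow> (- 24906930938570400360) | RAS_RAF \<Rightarrow> 1115578147810579200 |
        MEK_pRAF \<Rightarrow> 4423823358240659120000 |
        pMEK_pRAF \<Rightarrow> 4678448208526848000000 |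
        ERK_ppMEK \<Rightarrow> 3915227897185636667172 |
        pERK_ppMEK \<Rightarrow> 3854188843271554752000 |
        RAF_RAFPH \<Rightarrow> 844280674005888000000 |
        ppMEK_PH \<Rightarrow> 4036980085096113841600 |
        pMEK_PH \<Rightarrow> (- 9700100209507373560000) |
        ppERK_PH \<Rightarrow> 202990762387255312000 |
        pERK_PH \<Rightarrow> 230126714894704628800 | _ \<Rightarrow> 0) |
      ppMEK \<Rightarrow> (case b of
        pRAF \<Rightarrow> 5279159170200519520000 | pMEK \<Rightarrow> (- 3477035832774720000000) |
        ppMEK \<Rightarrow> (- 10054392892215124446696) |
        pERK \<Rightarrow> 13225536037766869893120 |
        ppERK \<Rightarrow> (- 8036328894923655491040) |
        RAS_RAF \<Rightarrow> 318335007780238910400 |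
        MEK_pRAF \<Rightarrow> 18048148587096988590000 |
        pMEK_pRAF \<Rightarrow> 16552942084062336000000 |
        ERK_ppMEK \<Rightarrow> 10959757271520818194232 |
        pERK_ppMEK \<Rightarrow> (- 8192935219885634534400) |
        RAF_RAFPH \<Rightarrow> 8115100756198656000000 |
        ppMEK_PH \<Rightarrow> (- 2198618204655420889600) |
        pMEK_PH \<Rightarrow> (- 3769368351613175200000) |
        ppERK_PH \<Rightarrow> 18190658809094282048000 |
        pERK_PH \<Rightarrow> 26047949151322946067200 | _ \<Rightarrow> 0) |
      pERK \<Rightarrow> (case b of
        pRAF \<Rightarrow> 2702582008352935520000 | pMEK \<Rightarrow> 347495348006400000000 |
        ppMEK \<Rightarrow> (- 13216583701369748729052) |
        pERK \<Rightarrow> (- 10060775594451181334400) |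
        ppERK \<Rightarrow> (- 10349841229774814245920) |
        RAS_RAF \<Rightarrow> 125367752839934606400 |
        MEK_pRAF \<Rightarrow> 2718127921150043790000 |
        pMEK_pRAF \<Rightarrow> (- 6121171412110464000000) |
        ERK_ppMEK \<Rightarrow> (- 3761077139003624854316) |
        pERK_ppMEK \<Rightarrow> (- 25625524369590253324800) |
        RAF_RAFPH \<Rightarrow> 2532058169738496000000 |
        ppMEK_PH \<Rightarrow> (- 12884139740612106652800) |
        pMEK_PH \<Rightarrow> (- 15710569843116000000) |
        ppERK_PH \<Rightarrow> (- 2718703022780996736000) |
        pERK_PH \<Rightarrow> (- 6325853858562195144000) | _ \<Rightarrow> 0) |
      ppERK \<Rightarrow> (case b of
        pRAF \<Rightarrow> 4641109842372512000000 | pMEK \<Rightarrow> (- 761268745749504000000) |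
        ppMEK \<Rightarrow> 8042070877704188107374 | pERK \<Rightarrow> 10349839386034911617280 |
        ppERK \<Rightarrow> (- 10060781330427732067920) |
        RAS_RAF \<Rightarrow> 173548570501933430400 |
        MEK_pRAF \<Rightarrow> 4650241555222302800000 |
        pMEK_pRAF \<Rightarrow> 10015410787182336000000 |
        ERK_ppMEK \<Rightarrow> 15161137553501971885542 |
        pERK_ppMEK \<Rightarrow> 8115892339162963027200 |
        RAF_RAFPH \<Rightarrow> 4340271346141056000000 |
        ppMEK_PH \<Rightarrow> 8022414590201398649600 |
        pMEK_PH \<Rightarrow> 35059323543628560000 |
        ppERK_PH \<Rightarrow> 15939490427309321024000 |
        pERK_PH \<Rightarrow> 15089716486653482556800 | _ \<Rightarrow> 0) |
      RAS_RAF \<Rightarrow> (case b of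
        pRAF \<Rightarrow> (- 4685317663080248160000) | pMEK \<Rightarrow> 53025633086016000000 |
        ppMEK \<Rightarrow> (- 318479053282377724746) |
        pERK \<Rightarrow> (- 125348163684553029120) |
        ppERK \<Rightarrow> (- 173553196186941030360) |
        RAS_RAF \<Rightarrow> (- 10060781683439013235200) |
        MEK_pRAF \<Rightarrow> (- 4685007677009263470000) |
        pMEK_pRAF \<Rightarrow> (- 4894087281228288000000) |
        ERK_ppMEK \<Rightarrow> (- 302882601985191942418) |
        pERK_ppMEK \<Rightarrow> (- 442278587473788768000) |
        RAF_RAFPH \<Rightarrow> (- 4391964784019328000000) |
        ppMEK_PH \<Rightarrow> (- 319065820925712084800) |
        pMEK_PH \<Rightarrow> (- 1984372952519240000) |
        ppERK_PH \<Rightarrow> (- 307672403019597488000) |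
        pERK_PH \<Rightarrow> (- 319997222014634667200) | _ \<Rightarrow> 0) |
      MEK_pRAF \<Rightarrow> (case b of
        pRAF \<Rightarrow> (- 3915315026339013760000) |
        pMEK \<Rightarrow> (- 3933394483454016000000) |
        ppMEK \<Rightarrow> (- 18037934870072110709688) |
        pERK \<Rightarrow> (- 2708556981294019163520) |
        ppERK \<Rightarrow> (- 4643986343733936043920) |
        RAS_RAF \<Rightarrow> 4684851085360332916800 |
        MEK_pRAF \<Rightarrow> (- 10057141340880114520000) |
        pMEK_pRAF \<Rightarrow> (- 10306235389074048000000) |
        ERK_ppMEK \<Rightarrow> (- 17032817391247915598104) |
        pERK_ppMEK \<Rightarrow> (- 21170447828373565363200) |
        RAF_RAFPH \<Rightarrow> (- 212413206094848000000) |
        ppMEK_PH \<Rightarrow> (- 18070168093300713033600) |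
        pMEK_PH \<Rightarrow> (- 4374434024412883760000) |
        ppERK_PH \<Rightarrow> (- 7647740736094905696000) |
        pERK_PH \<Rightarrow> (- 7757607667653103051200) | _ \<Rightarrow> 0) |
      pMEK_pRAF \<Rightarrow> (case b of
        pRAF \<Rightarrow> (- 4004809784799077600000) |
        pMEK \<Rightarrow> (- 3986935687160640000000) |
        ppMEK \<Rightarrow> (- 16540403757946912250376) |
        pERK \<Rightarrow> 6128493157210481525760 |
        ppERK \<Rightarrow> (- 10009530554147504535600) |
        RAS_RAF \<Rightarrow> 4893913514760034276800 |
        MEK_pRAF \<Rightarrow> 10317415678663536250000 |
        pMEK_pRAF \<Rightarrow> (- 10054511312976768000000) |
        ERK_ppMEK \<Rightarrow> (- 2153585182841314779208) |
        pERK_ppMEK \<Rightarrow> (- 19055126247764421811200) |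
        RAF_RAFPH \<Rightarrow> 629092723210752000000 |
        ppMEK_PH \<Rightarrow> (- 12040928775705437939200) |
        pMEK_PH \<Rightarrow> (- 4678814357458528400000) |
        ppERK_PH \<Rightarrow> 4499286580542116960000 |
        pERK_PH \<Rightarrow> 9633012537702957065600 | _ \<Rightarrow> 0) |
      ERK_ppMEK \<Rightarrow> (case b of
        pRAF \<Rightarrow> 4271394413747776480000 | pMEK \<Rightarrow> (- 3304023724430016000000) |
        ppMEK \<Rightarrow> (- 10941810324696238338324) |
        pERK \<Rightarrow> 3769876719704014339200 |
        ppERK \<Rightarrow> (- 15155407012398808832280) |
        RAS_RAF \<Rightarrow> 302753241268091740800 |
        MEK_pRAF \<Rightarrow> 17048628418194670710000 |
        pMEK_pRAF \<Rightarrow> 2170365864436992000000 |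
        ERK_ppMEK \<Rightarrow> (- 10049332572540754517892) |
        pERK_ppMEK \<Rightarrow> (- 26280210658252378713600) |
        RAF_RAFPH \<Rightarrow> 7169057862880512000000 |
        ppMEK_PH \<Rightarrow> (- 11358222778382662500800) |
        pMEK_PH \<Rightarrow> (- 3875055221038234760000) |
        ppERK_PH \<Rightarrow> 832175249582834416000 |
        pERK_PH \<Rightarrow> 6664667669794197712000 | _ \<Rightarrow> 0) |
      pERK_ppMEK \<Rightarrow> (case b of
        pRAF \<Rightarrow> 8411926916095162720000 | pMEK \<Rightarrow> (- 3631169378858688000000) |
        ppMEK \<Rightarrow> 8206705696659589616574 | pERK \<Rightarrow> 25634319739003319370240 |
        ppERK \<Rightarrow> (- 8110158247274969373000) |
        RAS_RAF \<Rightarrow> 442137965574748564800 |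
        MEK_pRAF \<Rightarrow> 21181819805184105390000 |
        pMEK_pRAF \<Rightarrow> 19068331429629312000000 |
        ERK_ppMEK \<Rightarrow> 26299020365844403661142 |
        pERK_ppMEK \<Rightarrow> (- 10053416352671021433600) |
        RAF_RAFPH \<Rightarrow> 11056095184620672000000 |
        ppMEK_PH \<Rightarrow> 7984634133822660296000 |
        pMEK_PH \<Rightarrow> (- 3843442817957606680000) |
        ppERK_PH \<Rightarrow> 28018394828728817840000 |
        pERK_PH \<Rightarrow> 34308893129204539294400 | _ \<Rightarrow> 0) |
      RAF_RAFPH \<Rightarrow> (case b of
        pRAF \<Rightarrow> (- 7873366081743542240000) |
        pMEK \<Rightarrow> (- 386780223460608000000) |
        ppMEK \<Rightarrow> (- 8115269668620073934370) |
        pERK \<Rightarrow> (- 2537894215358214577920) |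
        ppERK \<Rightarrow> (- 4352358135105494754720) |
        RAS_RAF \<Rightarrow> 4391419272737713819200 |
        MEK_pRAF \<Rightarrow> 211877963612373370000 |
        pMEK_pRAF \<Rightarrow> (- 632368097649792000000) |
        ERK_ppMEK \<Rightarrow> (- 7174571200447031987210) |
        pERK_ppMEK \<Rightarrow> (- 11052715214783687750400) |
        RAF_RAFPH \<Rightarrow> (- 10064475453693312000000) |
        ppMEK_PH \<Rightarrow> (- 8100194616808618342400) |
        pMEK_PH \<Rightarrow> (- 861019117852454880000) |
        ppERK_PH \<Rightarrow> (- 7112243623568125856000) |
        pERK_PH \<Rightarrow> (- 7214967097382849715200) | _ \<Rightarrow> 0) |
      ppMEK_PH \<Rightarrow> (case b of
        pRAF \<Rightarrow> 5270340650781023840000 | pMEK \<Rightarrow> (- 3757969959235392000000) |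
        ppMEK \<Rightarrow> 2208583493582984770602 | pERK \<Rightarrow> 12889471190718587640960 |
        ppERK \<Rightarrow> (- 8009631685734275861640) |
        RAS_RAF \<Rightarrow> 318442145236794129600 |
        MEK_pRAF \<Rightarrow> 18075962347345620830000 |
        pMEK_pRAF \<Rightarrow> 12047175440759424000000 |
        ERK_ppMEK \<Rightarrow> 11370442141821920992466 |
        pERK_ppMEK \<Rightarrow> (- 7973020686140515795200) |
        RAF_RAFPH \<Rightarrow> 8095939283065344000000 |
        ppMEK_PH \<Rightarrow> (- 10057030536448705300800) |
        pMEK_PH \<Rightarrow> (- 3843238684820012120000) |
        ppERK_PH \<Rightarrow> 14301682500879403248000 |
        pERK_PH \<Rightarrow> 22207807318499852937600 | _ \<Rightarrow> 0) |
      pMEK_PH \<Rightarrow> (case b of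
        pRAF \<Rightarrow> (- 1848587897805035520000) | pMEK \<Rightarrow> 9699123630200256000000 |
        ppMEK \<Rightarrow> 3769803038585358707868 | pERK \<Rightarrow> 17514181600991498880 |
        ppERK \<Rightarrow> (- 10998849626643528960) | RAS_RAF \<Rightarrow> 572638498975972800 |
        MEK_pRAF \<Rightarrow> 4367905787897934160000 |
        pMEK_pRAF \<Rightarrow> 4672497936746112000000 |
        ERK_ppMEK \<Rightarrow> 3874841504618031056044 |
        pERK_ppMEK \<Rightarrow> 3846888659818216204800 |
        RAF_RAFPH \<Rightarrow> 854859287592192000000 |
        ppMEK_PH \<Rightarrow> 3844106501407080054400 |
        pMEK_PH \<Rightarrow> (- 10060794284094867840000) |
        ppERK_PH \<Rightarrow> (- 3958878675710528000) |
        pERK_PH \<Rightarrow> 9587678084396612800 | _ \<Rightarrow> 0) |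
      ppERK_PH \<Rightarrow> (case b of
        pRAF \<Rightarrow> 7589906619783053120000 | pMEK \<Rightarrow> 62648089204416000000 |
        ppMEK \<Rightarrow> (- 18180821292642866669988) |
        pERK \<Rightarrow> 2715276908789869559040 |
        ppERK \<Rightarrow> (- 15932433939743232927360) |
        RAS_RAF \<Rightarrow> 307211377363794273600 |
        MEK_pRAF \<Rightarrow> 7656761645975257140000 |
        pMEK_pRAF \<Rightarrow> (- 4495025190688896000000) |
        ERK_ppMEK \<Rightarrow> (- 825320473897471662004) |
        pERK_ppMEK \<Rightarrow> (- 28008094258588588684800) |
        RAF_RAFPH \<Rightarrow> 7097709851042304000000 |
        ppMEK_PH \<Rightarrow> (- 14294248035095371718400) |
        pMEK_PH \<Rightarrow> 12424461456101760000 |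
        ppERK_PH \<Rightarrow> (- 10063104682796073408000) |
        pERK_PH \<Rightarrow> 4982378796418552502400 | _ \<Rightarrow> 0) |
      pERK_PH \<Rightarrow> (case b of
        pRAF \<Rightarrow> 7699134914437551360000 | pMEK \<Rightarrow> 335477191607040000000 |
        ppMEK \<Rightarrow> (- 26038305109628788996554) |
        pERK \<Rightarrow> 6322432432399361064960 |
        ppERK \<Rightarrow> (- 15082664024741860918800) |
        RAS_RAF \<Rightarrow> 319540827969639979200 |
        MEK_pRAF \<Rightarrow> 7766383071890207120000 |
        pMEK_pRAF \<Rightarrow> (- 9629278052848512000000) |
        ERK_ppMEK \<Rightarrow> (- 6658031249702789246482) |
        pERK_ppMEK \<Rightarrow> (- 34298814617044638662400) |
        RAF_RAFPH \<Rightarrow> 7202929357913088000000 |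
        ppMEK_PH \<Rightarrow> (- 22203285657730430870400) |
        pMEK_PH \<Rightarrow> (- 8039684690183600000) |
        ppERK_PH \<Rightarrow> (- 4989709725972329280000) |
        pERK_PH \<Rightarrow> (- 10065787743086197862400) | _ \<Rightarrow> 0) |
      _ \<Rightarrow> 0)"

lemma positive_steady_state_xs2: "positive_steady_state rates xs2"
  unfolding positive_steady_state_def vec_eq_iff
proof (intro conjI allI)
  fix s
  show "0 < xs2 $ s" and "fld rates xs2 $ s = 0 $ s"
    by (cases s; simp add: xs2_def fld_nth rates_nth)+
qed

lemma fld_expansion_xs2:
  assumes "a \<in> free_species" and "v \<in> cons_kernel"
  shows "fld rates (xs2 + v) $ a = (\<Sum>c\<in>UNIV. A2 a c * v$c) / jac_scale + fld_quad rates v $ a"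
  using assms(1) unfolding free_species_def sum_UNIV_species
  by (auto simp: assms(2)[unfolded mem_cons_kernel_iff] fld_nth fld_quad_nth rates_nth xs2_def A2_def jac_scale_def field_simps)

lemma Q2_eq:
  "Q2 a b = (\<Sum>j\<in>UNIV. R2 j a * R2 j b) + (if a = b \<and> a \<in> free_species then \<mu>2 else 0)"
  unfolding sum_UNIV_species
  by (cases a; cases b) (simp_all add: Q2_def R2_def free_species_def \<mu>2_def)

lemma R2_eq_0: "a \<notin> free_species \<Longrightarrow> R2 j a = 0"
  by (cases a; cases j) (simp_all add: R2_def free_species_def)

lemma N2_eq: "2 * (\<Sum>a\<in>UNIV. Q2 a b * A2 a c) = N2 b c"
  unfolding sum_UNIV_species by (cases b; cases c) (simp_all add: Q2_def A2_def N2_def)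

lemma N2_diag_dominant:
  "N2 b b + (\<Sum>c\<in>UNIV-{b}. \<bar>N2 b c + N2 c b\<bar> / 2) \<le> (if b \<in> free_species then -1 else 0)"
  by (cases b) (simp_all add: sum_diff1 sum_UNIV_species N2_def free_species_def)

lemma asympt_stable_xs2: "asympt_stable rates xs2"
  by (rule erk_certificate.asympt_stable[OF erk_certificate.intro[OF rates_nonneg fld_expansion_xs2 _
        Q2_eq R2_eq_0 _ N2_eq N2_diag_dominant]])
    (simp_all add: jac_scale_def \<mu>2_def)

definition xs2_minus_xs1_coeff :: "nat \<Rightarrow> real" where
  "xs2_minus_xs1_coeff i = [
     (- (275241 / 6400)), 0, (- (755241 / 6400)), (3 / 40), 0, 0, (576647 / 6400), 0,
     (1536647 / 6400), (1546199 / 6400), 0, (4831 / 20), (279 / 64), 0, 0, (- (3 / 2)), 0, 0,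
     (3716197 / 12800), 0, (3694597 / 12800), (3612197 / 12800), 0, (615197 / 12800),
     (2997 / 12800), 0, 0, (9 / 8), 0, 0] ! i"

lemma xs2_minus_xs1_coeff_nth:
  "xs2_minus_xs1_coeff 0 = (- (275241 / 6400))" "xs2_minus_xs1_coeff 1 = 0"
  "xs2_minus_xs1_coeff 2 = (- (755241 / 6400))" "xs2_minus_xs1_coeff 3 = (3 / 40)"
  "xs2_minus_xs1_coeff 4 = 0" "xs2_minus_xs1_coeff 5 = 0"
  "xs2_minus_xs1_coeff 6 = (576647 / 6400)" "xs2_minus_xs1_coeff 7 = 0"
  "xs2_minus_xs1_coeff 8 = (1536647 / 6400)" "xs2_minus_xs1_coeff 9 = (1546199 / 6400)"
  "xs2_minus_xs1_coeff 10 = 0" "xs2_minus_xs1_coeff 11 = (4831 / 20)"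
  "xs2_minus_xs1_coeff 12 = (279 / 64)" "xs2_minus_xs1_coeff 13 = 0"
  "xs2_minus_xs1_coeff 14 = 0" "xs2_minus_xs1_coeff 15 = (- (3 / 2))"
  "xs2_minus_xs1_coeff 16 = 0" "xs2_minus_xs1_coeff 17 = 0"
  "xs2_minus_xs1_coeff 18 = (3716197 / 12800)" "xs2_minus_xs1_coeff 19 = 0"
  "xs2_minus_xs1_coeff 20 = (3694597 / 12800)" "xs2_minus_xs1_coeff 21 = (3612197 / 12800)"
  "xs2_minus_xs1_coeff 22 = 0" "xs2_minus_xs1_coeff 23 = (615197 / 12800)"
  "xs2_minus_xs1_coeff 24 = (2997 / 12800)" "xs2_minus_xs1_coeff 25 = 0"
  "xs2_minus_xs1_coeff 26 = 0" "xs2_minus_xs1_coeff 27 = (9 / 8)" "xs2_minus_xs1_coeff 28 = 0"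
  "xs2_minus_xs1_coeff 29 = 0"
  "xs2_minus_xs1_coeff (Suc 0) = 0" \<comment> \<open>the form in which simp presents index 1\<close>
  by (simp_all add: xs2_minus_xs1_coeff_def)

lemma xs2_minus_xs1: "xs2 - xs1 = (\<Sum>i<30. xs2_minus_xs1_coeff i *\<^sub>R rvec i)"
  unfolding vec_eq_iff
proof
  fix s
  have "(\<Sum>i<30. xs2_minus_xs1_coeff i *\<^sub>R rvec i) $ s = (\<Sum>i\<leftarrow>[0..<30]. xs2_minus_xs1_coeff i * rvec i $ s)"
    unfolding sum_lessThan_30[symmetric] by simp
  then show "(xs2 - xs1) $ s = (\<Sum>i<30. xs2_minus_xs1_coeff i *\<^sub>R rvec i) $ s"
    unfolding upt_30 rvec_def cplx_def
    by (cases s) (simp_all add: erk_reactions_def xs2_minus_xs1_coeff_nth xs1_def xs2_def)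
qed

lemma xs2_in_compat_class_xs1: "xs2 \<in> compat_class xs1"
proof -
  have "(\<Sum>i<30. xs2_minus_xs1_coeff i *\<^sub>R rvec i) \<in> stoich"
    unfolding stoich_def by (intro span_sum span_scale span_base) (simp add: length_erk_reactions)
  then show ?thesis
    using xs2_minus_xs1 positive_steady_state_xs2
    by (auto simp: compat_class_def positive_steady_state_def less_imp_le)
qed

lemma xs1_neq_xs2: "xs1 \<noteq> xs2"
proof
  assume "xs1 = xs2"
  then have "xs1 $ pRAF = xs2 $ pRAF"
    by simp
  then show False
    by (simp add: xs1_def xs2_def)
qed

theorem mainTheorem4:
  shows "\<exists>k :: nat \<Rightarrow> real. (\<forall>i<30. 0 < k i) \<and>
           (\<exists>x y. x \<noteq> y \<and> y \<in> compat_class x \<and>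
              positive_steady_state k x \<and> positive_steady_state k y \<and>
              asympt_stable k x \<and> asympt_stable k y)"
  using rates_pos xs1_neq_xs2 xs2_in_compat_class_xs1 positive_steady_state_xs1
    positive_steady_state_xs2 asympt_stable_xs1 asympt_stable_xs2
  by blast

end
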